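(* Let $k\ge1$ be the cache size and $H_k=\sum_{j=1}^k 1/j$. In both the discard-predictions setup and the phase-predictions setup, there is no (possibly randomized) online paging algorithm that is $(\alpha,\beta,\gamma)$-competitive with either $\alpha+\beta<H_k$ or $\alpha+(k-1)\gamma<H_k$.
   Context: Paging: there is a universe $U$ of pages and a cache holding at most $k$ pages. Requests $r_1,\dots,r_n\in U$ arrive online. If the requested page is not in the cache (a page fault), it must be loaded, evicting a cached page if the cache holds $k$ pages. The cost is the number of page faults; $\mathrm{OPT}(I)$ is the minimum offline cost on request sequence $I$. Along with each request $r_i$ the online algorithm receives a prediction bit $p_i\in\{0,1\}$ (which may be arbitrary). An algorithm is $(\alpha,\beta,\gamma)$-competitive (with $\alpha,\beta,\gamma\ge0$) if there is a constant $b$ (possibly depending on $k$) such that for every instance $I$ and all predictions $p$, $\mathbb{E}[\mathrm{ALG}(I,p)]\le \alpha\,\mathrm{OPT}(I)+\beta\,\eta_0+\gamma\,\eta_1+b$, the expectation being over the algorithm's randomness. Discard-predictions setup: fix the optimal offline algorithm LFD (on a fault with full cache, evict a cached page never requested again if one exists, otherwise the cached page whose next request is furthest in the future; ties broken by a fixed rule). Ground truth: $p_i^*=0$ if LFD keeps $r_i$ in cache until its next request (or to the end if none), $p_i^*=1$ if LFD evicts $r_i$ before it is requested again. Errors: $\eta_h=|\{i\in[n]: p_i=h,\ p_i^*=1-h\}|$. Phase-predictions setup: partition the requests into $k$-phases (the first starts at $r_1$; each phase is a maximal contiguous segment with at most $k$ distinct pages; the next starts right after). For $r_i$ in phase $j$: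 $p_i^*=0$ if page $r_i$ is requested in phase $j+1$, else $p_i^*=1$. Errors: $\eta_h$ = number of counted requests $i$ with $p_i=h$, $p_i^*=1-h$, where counted requests are, for each non-last phase $j$ and each page requested in phase $j$, only the last request to that page within phase $j$. *)

theory Defs
  imports "HOL-Probability.Probability"
begin

text \<open>A run of a paging algorithm is recorded as a list of pairs (request, cache content after
serving that request). The cache starts empty.\<close>

fun fault_count :: "'p set \<Rightarrow> ('p \<times> 'p set) list \<Rightarrow> nat" where
  "fault_count C [] = 0"
| "fault_count C ((r, C') # xs) = (if r \<in> C then 0 else 1) + fault_count C' xs"

fun valid_run :: "nat \<Rightarrow> 'p set \<Rightarrow> ('p \<times> 'p set) list \<Rightarrow> bool" where
  "valid_run k C [] = True"
| "valid_run k C ((r, C') # xs) =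
     (r \<in> C' \<and> finite C' \<and> card C' \<le> k \<and> C' \<subseteq> insert r C \<and> valid_run k C' xs)"

definition opt :: "nat \<Rightarrow> 'p list \<Rightarrow> nat" where
  "opt k I = (LEAST c. \<exists>cs. length cs = length I \<and> valid_run k {} (zip I cs)
                          \<and> c = fault_count {} (zip I cs))"

text \<open>A (behavioural) randomized online algorithm: given the history (past requests with their
prediction bits and the caches chosen) and the current request with its prediction bit,
it returns a distribution over the new cache content. Prediction bits are booleans,
True = 1, False = 0.\<close>

type_synonym 'p history = "(('p \<times> bool) \<times> 'p set) list"
type_synonym 'p ralg = "'p history \<Rightarrow> ('p \<times> bool) \<Rightarrow> 'p set pmf"

definition last_cache :: "'p history \<Rightarrow> 'p set" where
  "last_cache h = (if h = [] then {} else snd (last h))"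

definition valid_alg :: "nat \<Rightarrow> 'p ralg \<Rightarrow> bool" where
  "valid_alg k R \<longleftrightarrow> (\<forall>h x C. C \<in> set_pmf (R h x) \<longrightarrow>
      fst x \<in> C \<and> finite C \<and> card C \<le> k \<and> C \<subseteq> insert (fst x) (last_cache h))"

primrec run_alg :: "'p ralg \<Rightarrow> 'p history \<Rightarrow> ('p \<times> bool) list \<Rightarrow> 'p history pmf" where
  "run_alg R h [] = return_pmf h"
| "run_alg R h (x # xs) = bind_pmf (R h x) (\<lambda>C. run_alg R (h @ [(x, C)]) xs)"

definition hist_faults :: "'p history \<Rightarrow> nat" where
  "hist_faults h = fault_count {} (map (\<lambda>(x, C). (fst x, C)) h)"

definition alg_cost :: "'p ralg \<Rightarrow> ('p \<times> bool) list \<Rightarrow> real" where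
  "alg_cost R xs = measure_pmf.expectation (run_alg R [] xs) (\<lambda>h. real (hist_faults h))"

text \<open>(alpha, beta, gamma)-competitiveness w.r.t. an error measure eta, where
eta xs False = eta_0 and eta xs True = eta_1.\<close>
definition competitive ::
  "nat \<Rightarrow> (('p \<times> bool) list \<Rightarrow> bool \<Rightarrow> nat) \<Rightarrow> 'p ralg \<Rightarrow> real \<Rightarrow> real \<Rightarrow> real \<Rightarrow> bool" where
  "competitive k eta R \<alpha> \<beta> \<gamma> \<longleftrightarrow> \<alpha> \<ge> 0 \<and> \<beta> \<ge> 0 \<and> \<gamma> \<ge> 0 \<and>
     (\<exists>b::real. \<forall>xs. alg_cost R xs \<le> \<alpha> * real (opt k (map fst xs))
                    + \<beta> * real (eta xs False) + \<gamma> * real (eta xs True) + b)"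

definition next_req :: "'p list \<Rightarrow> nat \<Rightarrow> 'p \<Rightarrow> nat" where
  "next_req I i q = (LEAST j. i < j \<and> j < length I \<and> I ! j = q)"

definition next_or_end :: "'p list \<Rightarrow> nat \<Rightarrow> nat" where
  "next_or_end I i = (if \<exists>j. i < j \<and> j < length I \<and> I ! j = I ! i
                       then next_req I i (I ! i) else length I)"

text \<open>A tie-breaking rule: tie I i F picks the page to evict among the set F of cached pages never
requested again, at step i of sequence I.\<close>
definition valid_tie :: "('p list \<Rightarrow> nat \<Rightarrow> 'p set \<Rightarrow> 'p) \<Rightarrow> bool" where
  "valid_tie tie \<longleftrightarrow> (\<forall>I i F. finite F \<and> F \<noteq> {} \<longrightarrow> tie I i F \<in> F)"

definition lfd_step :: "nat \<Rightarrow> ('p list \<Rightarrow> nat \<Rightarrow> 'p set \<Rightarrow> 'p) \<Rightarrow> 'p list \<Rightarrow> nat \<Rightarrow> 'p set \<Rightarrow> 'p set" where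
  "lfd_step k tie I i C =
     (let r = I ! i in
      if r \<in> C then C
      else if card C < k then insert r C
      else let F = {q \<in> C. q \<notin> set (drop (Suc i) I)};
               v = (if F \<noteq> {} then tie I i F else arg_max_on (next_req I i) C)
           in insert r (C - {v}))"

text \<open>lfd_cache k tie I i = LFD's cache before serving request i (i.e. after requests 0..i-1).\<close>
primrec lfd_cache :: "nat \<Rightarrow> ('p list \<Rightarrow> nat \<Rightarrow> 'p set \<Rightarrow> 'p) \<Rightarrow> 'p list \<Rightarrow> nat \<Rightarrow> 'p set" where
  "lfd_cache k tie I 0 = {}"
| "lfd_cache k tie I (Suc i) = lfd_step k tie I i (lfd_cache k tie I i)"

text \<open>Ground truth (True = 1): LFD evicts r_i before its next request (or the end).\<close>
definition discard_pstar :: "nat \<Rightarrow> ('p list \<Rightarrow> nat \<Rightarrow> 'p set \<Rightarrow> 'p) \<Rightarrow> 'p list \<Rightarrow> nat \<Rightarrow> bool" where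
  "discard_pstar k tie I i \<longleftrightarrow>
     (\<exists>j. i < j \<and> j \<le> next_or_end I i \<and> I ! i \<notin> lfd_cache k tie I j)"

definition discard_eta :: "nat \<Rightarrow> ('p list \<Rightarrow> nat \<Rightarrow> 'p set \<Rightarrow> 'p) \<Rightarrow> ('p \<times> bool) list \<Rightarrow> bool \<Rightarrow> nat" where
  "discard_eta k tie xs h = card {i. i < length xs \<and> snd (xs ! i) = h
                                   \<and> discard_pstar k tie (map fst xs) i = (\<not> h)}"

text \<open>phase_ids k S j rs: phase indices of the requests rs, where the current phase has index j
and has so far seen the distinct pages S.\<close>
fun phase_ids :: "nat \<Rightarrow> 'p set \<Rightarrow> nat \<Rightarrow> 'p list \<Rightarrow> nat list" where
  "phase_ids k S j [] = []"
| "phase_ids k S j (r # rs) =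
     (if r \<in> S \<or> card S < k then j # phase_ids k (insert r S) j rs
      else Suc j # phase_ids k {r} (Suc j) rs)"

definition phase :: "nat \<Rightarrow> 'p list \<Rightarrow> nat \<Rightarrow> nat" where
  "phase k I i = phase_ids k {} 0 I ! i"

definition phase_pstar :: "nat \<Rightarrow> 'p list \<Rightarrow> nat \<Rightarrow> bool" where
  "phase_pstar k I i \<longleftrightarrow>
     \<not> (\<exists>i'<length I. phase k I i' = Suc (phase k I i) \<and> I ! i' = I ! i)"

definition counted :: "nat \<Rightarrow> 'p list \<Rightarrow> nat \<Rightarrow> bool" where
  "counted k I i \<longleftrightarrow> i < length I \<and> (\<exists>i'<length I. phase k I i < phase k I i')
     \<and> \<not> (\<exists>i'. i < i' \<and> i' < length I \<and> phase k I i' = phase k I i \<and> I ! i' = I ! i)"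

definition phase_eta :: "nat \<Rightarrow> ('p \<times> bool) list \<Rightarrow> bool \<Rightarrow> nat" where
  "phase_eta k xs h = card {i. counted k (map fst xs) i \<and> snd (xs ! i) = h
                              \<and> phase_pstar k (map fst xs) i = (\<not> h)}"

end

theory Submission
  imports Defs
begin

text \<open>The adversary uses k + 1 pages and works in phases. A phase requests k distinct pages
x_0, ..., x_{k-1}, each immediately followed by the whole prefix x_0, ..., x_j. The page x_j is
chosen among the k + 1 - j pages that keep the phase distinct (one page for j = 0), by averaging so
that the expected cost plus a potential grows by at least 1/(k + 1 - j); hence every phase costs any
algorithm at least H_k in expectation. The repeated prefixes force LFD to evict only at phase
starts, so OPT \<le> k + N on N phases. All predictions are 0 except in the last block of each
phase, which carries a common bit m; in both setups this gives \<eta>_0 \<le> N, \<eta>_1 = 0 for m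
= 0 and \<eta>_0 = 0, \<eta>_1 \<le> (k - 1) N + 1 for m = 1. Choosing m according to which
hypothesis holds, competitiveness would give N H_k \<le> N (\<alpha> + \<beta>) + O(1), resp. N
(\<alpha> + (k - 1) \<gamma>) + O(1), false for large N.\<close>

lemma integrable_pmf_bounded:
  fixes f :: "_ \<Rightarrow> real"
  assumes "\<And>x. x \<in> set_pmf M \<Longrightarrow> \<bar>f x\<bar> \<le> B"
  shows "integrable (measure_pmf M) f"
  by (rule measure_pmf.integrable_const_bound[where B=B]) (auto intro!: AE_pmfI assms)

lemma expectation_pmf_mono:
  fixes f g :: "_ \<Rightarrow> real"
  assumes "integrable (measure_pmf M) f" "integrable (measure_pmf M) g"
    and "\<And>x. x \<in> set_pmf M \<Longrightarrow> f x \<le> g x"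
  shows "measure_pmf.expectation M f \<le> measure_pmf.expectation M g"
  by (rule integral_mono_AE) (auto intro!: AE_pmfI assms)

lemma expectation_pmf_ge_const:
  fixes f :: "_ \<Rightarrow> real"
  assumes "integrable (measure_pmf M) f" "\<And>x. x \<in> set_pmf M \<Longrightarrow> c \<le> f x"
  shows "c \<le> measure_pmf.expectation M f"
  using expectation_pmf_mono[of M "\<lambda>_. c" f] assms by simp

lemma expectation_pmf_abs_le:
  fixes f :: "_ \<Rightarrow> real"
  assumes "\<And>x. x \<in> set_pmf M \<Longrightarrow> \<bar>f x\<bar> \<le> B"
  shows "\<bar>measure_pmf.expectation M f\<bar> \<le> B"
proof -
  have "\<bar>measure_pmf.expectation M f\<bar> \<le> measure_pmf.expectation M (\<lambda>x. \<bar>f x\<bar>)"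
    using integral_norm_bound[of M f] by simp
  also have "\<dots> \<le> measure_pmf.expectation M (\<lambda>_. B)"
    using assms by (intro expectation_pmf_mono integrable_pmf_bounded[where B=B])
      (auto intro: order_trans[OF abs_ge_zero])
  finally show ?thesis by simp
qed

lemma expectation_bind_pmf:
  fixes f :: "_ \<Rightarrow> real"
  assumes "\<And>x. x \<in> set_pmf (bind_pmf M N) \<Longrightarrow> \<bar>f x\<bar> \<le> B"
  shows "measure_pmf.expectation (bind_pmf M N) f
       = measure_pmf.expectation M (\<lambda>x. measure_pmf.expectation (N x) f)"
proof -
  \<comment> \<open>The library rule needs a global bound, so first clip f outside the support.\<close>
  define g where "g x = max (- \<bar>B\<bar>) (min \<bar>B\<bar> (f x))" for x
  have g_eq: "g y = f y" if "y \<in> set_pmf (bind_pmf M N)" for y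
    using assms[OF that] by (auto simp: g_def)
  have "measure_pmf.expectation (bind_pmf M N) f = measure_pmf.expectation (bind_pmf M N) g"
    by (rule integral_cong_AE) (auto intro!: AE_pmfI simp: g_eq)
  also have "\<dots> = measure_pmf.expectation M (\<lambda>x. measure_pmf.expectation (N x) g)"
    unfolding measure_pmf_bind
    by (rule integral_bind[where K="count_space UNIV" and B="\<bar>B\<bar>" and B'=1])
      (auto simp: g_def measure_pmf.emeasure_space_1 measure_pmf_in_subprob_algebra
        prob_space_imp_subprob_space)
  also have "\<dots> = measure_pmf.expectation M (\<lambda>x. measure_pmf.expectation (N x) f)"
    by (rule integral_cong_AE) (auto intro!: AE_pmfI integral_cong_AE g_eq)
  finally show ?thesis .
qed

definition final_cache :: "'p set \<Rightarrow> ('p \<times> 'p set) list \<Rightarrow> 'p set" where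
  "final_cache C ps = (if ps = [] then C else snd (last ps))"

lemma fault_count_append:
  "fault_count C (ps @ qs) = fault_count C ps + fault_count (final_cache C ps) qs"
  by (induction C ps rule: fault_count.induct) (auto simp: final_cache_def)

lemma fault_count_le_length: "fault_count C ps \<le> length ps"
  by (induction C ps rule: fault_count.induct) auto

lemma card_requests_diff_le_fault_count:
  "valid_run k C ps \<Longrightarrow> card (set (map fst ps) - C) \<le> fault_count C ps"
proof (induction ps arbitrary: C)
  case Nil
  then show ?case by simp
next
  case (Cons p ps)
  obtain r C' where p: "p = (r, C')" by (cases p)
  with Cons.prems have C': "C' \<subseteq> insert r C" "valid_run k C' ps" by auto
  have "set (map fst (p # ps)) - C \<subseteq> (set (map fst ps) - C') \<union> ({r} - C)"
    using p C'(1) by auto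
  then have "card (set (map fst (p # ps)) - C) \<le> card ((set (map fst ps) - C') \<union> ({r} - C))"
    by (rule card_mono[rotated]) auto
  also have "\<dots> \<le> card (set (map fst ps) - C') + card ({r} - C)"
    by (rule card_Un_le)
  also have "\<dots> \<le> fault_count C' ps + card ({r} - C)"
    using Cons.IH[OF C'(2)] by simp
  also have "\<dots> = fault_count C (p # ps)"
    by (simp add: p insert_Diff_if)
  finally show ?case .
qed

lemma final_cache_subset:
  "valid_run k C ps \<Longrightarrow> final_cache C ps \<subseteq> C \<union> set (map fst ps)"
proof (induction ps arbitrary: C)
  case Nil
  then show ?case by (simp add: final_cache_def)
next
  case (Cons p ps)
  obtain r C' where p: "p = (r, C')" by (cases p)
  with Cons.prems have "C' \<subseteq> insert r C" "valid_run k C' ps" by auto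
  moreover have "final_cache C (p # ps) = final_cache C' ps"
    by (simp add: final_cache_def p)
  ultimately show ?case using Cons.IH p by fastforce
qed

abbreviation hist_run :: "'p history \<Rightarrow> ('p \<times> 'p set) list" where
  "hist_run \<equiv> map (\<lambda>(x, C). (fst x, C))"

lemma final_cache_hist_run: "final_cache (last_cache h) (hist_run h') = last_cache (h @ h')"
  by (cases h' rule: rev_cases) (auto simp: final_cache_def last_cache_def split: prod.splits)

lemma hist_faults_append:
  "hist_faults (h @ h') = hist_faults h + fault_count (last_cache h) (hist_run h')"
  using final_cache_hist_run[of "[]" h]
  by (simp add: hist_faults_def fault_count_append last_cache_def)

lemma hist_faults_le_length: "hist_faults h \<le> length h"
  unfolding hist_faults_def by (metis fault_count_le_length length_map)

lemma run_alg_append: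
  "run_alg R h (xs @ ys) = bind_pmf (run_alg R h xs) (\<lambda>h'. run_alg R h' ys)"
  by (induction xs arbitrary: h) (auto simp: bind_return_pmf bind_assoc_pmf)

lemma length_run_alg: "h' \<in> set_pmf (run_alg R h xs) \<Longrightarrow> length h' = length h + length xs"
  by (induction xs arbitrary: h) auto

lemma run_alg_extends:
  assumes "valid_alg k R" "h' \<in> set_pmf (run_alg R h xs)"
  shows "\<exists>h''. h' = h @ h'' \<and> map fst h'' = xs \<and> valid_run k (last_cache h) (hist_run h'')"
  using assms(2)
proof (induction xs arbitrary: h)
  case Nil
  then show ?case by simp
next
  case (Cons x xs)
  then obtain C where C: "C \<in> set_pmf (R h x)"
    and h': "h' \<in> set_pmf (run_alg R (h @ [(x, C)]) xs)" by auto
  from Cons.IH[OF h'] obtain h'' where h'': "h' = (h @ [(x, C)]) @ h''" "map fst h'' = xs"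
    "valid_run k C (hist_run h'')" by (auto simp: last_cache_def)
  from assms(1) C have "fst x \<in> C \<and> finite C \<and> card C \<le> k \<and> C \<subseteq> insert (fst x) (last_cache h)"
    by (cases x) (force simp: valid_alg_def)
  with h'' show ?case by (intro exI[of _ "(x, C) # h''"]) (auto split: prod.splits)
qed

lemma integrable_run_alg_faults_plus:
  assumes "\<And>h. \<bar>g h\<bar> \<le> 1"
  shows "integrable (measure_pmf (run_alg R h0 xs)) (\<lambda>h. real (hist_faults h) + g h)"
proof (rule integrable_pmf_bounded[where B="real (length h0 + length xs) + 1"])
  fix h assume "h \<in> set_pmf (run_alg R h0 xs)"
  with hist_faults_le_length[of h] length_run_alg[of h R h0 xs] assms[of h]
  show "\<bar>real (hist_faults h) + g h\<bar> \<le> real (length h0 + length xs) + 1"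
    by (auto simp: abs_le_iff)
qed

section \<open>Potential argument of the adversary\<close>

text \<open>The adversary keeps a set U of candidate pages for its next request. The potential of a
cache C lies in [-1, 0]; it is small enough that the fraction of candidates missing from C exceeds
it by at least 1/|U|, and large enough that any drop caused by re-requesting the other pages is
paid for by the faults of those requests.\<close>

definition potential :: "'p set \<Rightarrow> 'p set \<Rightarrow> real" where
  "potential U C = max (-1) (min 0 ((real (card U) - 1 - real (card (C \<inter> U))) / real (card U)))"

lemma potential_nonpos: "potential U C \<le> 0"
  by (simp add: potential_def)

lemma abs_potential_le_1: "\<bar>potential U C\<bar> \<le> 1"
  by (simp add: potential_def)

lemma potential_le_misses:
  assumes "finite U" "card U \<ge> 1"
  shows "real (card U) * potential U C + 1 \<le> real (card (U - C))"
proof -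
  define u where "u = real (card U)"
  define a where "a = real (card (C \<inter> U))"
  have "a \<le> u" "u \<ge> 1"
    using assms unfolding a_def u_def by (auto intro!: card_mono)
  then have "potential U C \<le> (u - 1 - a) / u"
    unfolding potential_def u_def[symmetric] a_def[symmetric] by (simp add: field_simps)
  then have "u * potential U C \<le> u - 1 - a"
    using \<open>u \<ge> 1\<close> by (simp add: field_simps)
  moreover have "real (card (U - C)) = u - a"
    unfolding u_def a_def using assms card_Diff_subset_Int[of U C] card_mono[of U "U \<inter> C"]
    by (simp add: Int_commute of_nat_diff)
  ultimately show ?thesis unfolding u_def by linarith
qed

lemma potential_ge_minus_fault_count:
  assumes run: "valid_run k C ps" "finite C" "card C \<le> k"
    and U: "finite U" "card U \<ge> 1" "U \<inter> set (map fst ps) = {}"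
    and card: "card U + card (set (map fst ps)) = Suc k"
  shows "- real (fault_count C ps) \<le> potential U (final_cache C ps)"
proof -
  define M where "M = set (map fst ps)"
  define f where "f = fault_count C ps"
  define a where "a = card (final_cache C ps \<inter> U)"
  have "card (M - C) \<le> f"
    unfolding f_def M_def by (rule card_requests_diff_le_fault_count[OF run(1)])
  moreover have "a \<le> card (C \<inter> U)"
    unfolding a_def using final_cache_subset[OF run(1)] U(3) run(2)
    by (intro card_mono) (auto simp: M_def)
  moreover have "card (C \<inter> U) + card (C \<inter> M) \<le> k"
  proof -
    have "card (C \<inter> U) + card (C \<inter> M) = card ((C \<inter> U) \<union> (C \<inter> M))"
      by (rule card_Un_disjoint[symmetric]) (use U run(2) in \<open>auto simp: M_def\<close>)
    also have "\<dots> \<le> card C" by (rule card_mono) (auto simp: run(2))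
    finally show ?thesis using run(3) by simp
  qed
  moreover have "card (M - C) + card (C \<inter> M) = card M"
    by (metis Int_commute M_def List.finite_set card_Diff_subset_Int card_mono inf_le1 le_add_diff_inverse2
        finite_Int)
  ultimately have "real (card U) - 1 - real a \<ge> - real f"
    using card unfolding M_def by linarith
  also have "- real f \<ge> - real f * real (card U)"
    using U(2) by (simp add: mult_le_cancel_left1)
  finally have "(real (card U) - 1 - real a) / real (card U) \<ge> - real f"
    using U(2) by (simp add: field_simps)
  then show ?thesis
    unfolding potential_def a_def[symmetric] f_def[symmetric] by (auto simp: max_def min_def)
qed

definition miss :: "'p history \<Rightarrow> 'p \<Rightarrow> real" where
  "miss h x = (if x \<in> last_cache h then 0 else 1)"

definition cost_potential :: "'p ralg \<Rightarrow> ('p \<times> bool) list \<Rightarrow> 'p set \<Rightarrow> real" where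
  "cost_potential R w U =
     measure_pmf.expectation (run_alg R [] w) (\<lambda>h. real (hist_faults h) + potential U (last_cache h))"

lemma miss_le_expectation_after_block:
  assumes R: "valid_alg k R" and P: "finite P" "card P = Suc k"
    and ys: "distinct (ys @ [x])" "set (ys @ [x]) \<subseteq> P" "length ys < k"
  shows "real (hist_faults h) + miss h x
    \<le> measure_pmf.expectation (run_alg R h ((x, False) # map (\<lambda>y. (y, b)) (ys @ [x])))
         (\<lambda>h'. real (hist_faults h') + potential (P - set (ys @ [x])) (last_cache h'))"
proof (rule expectation_pmf_ge_const)
  let ?block = "(x, False) # map (\<lambda>y. (y, b)) (ys @ [x])"
  let ?U = "P - set (ys @ [x])"
  show "integrable (measure_pmf (run_alg R h ?block))
      (\<lambda>h'. real (hist_faults h') + potential ?U (last_cache h'))"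
    by (rule integrable_run_alg_faults_plus[OF abs_potential_le_1])
  fix h' assume "h' \<in> set_pmf (run_alg R h ?block)"
  from run_alg_extends[OF R this] obtain C1 h''
    where h': "h' = h @ ((x, False), C1) # h''" "map fst h'' = map (\<lambda>y. (y, b)) (ys @ [x])"
      and run: "valid_run k (last_cache h) ((x, C1) # hist_run h'')"
    by (auto simp: Cons_eq_map_conv)
  have requests: "set (map fst (hist_run h'')) = set (ys @ [x])"
    using arg_cong[OF h'(2), of "map fst"] by (auto simp: case_prod_unfold o_def)
  have "card ?U + card (set (ys @ [x])) = Suc k"
    using P ys(2) card_Diff_subset[of "set (ys @ [x])" P] card_mono[OF P(1) ys(2)] by simp
  moreover have "card ?U \<ge> 1"
    using calculation distinct_card[OF ys(1)] ys(3) by simp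
  ultimately have "- real (fault_count C1 (hist_run h'')) \<le> potential ?U (final_cache C1 (hist_run h''))"
    using run P(1) requests by (intro potential_ge_minus_fault_count) auto
  moreover have "last_cache h' = final_cache C1 (hist_run h'')"
    unfolding h'(1) by (cases h'' rule: rev_cases)
      (auto simp: last_cache_def final_cache_def split: prod.splits)
  ultimately show "real (hist_faults h) + miss h x \<le> real (hist_faults h') + potential ?U (last_cache h')"
    unfolding h'(1) hist_faults_append by (simp add: miss_def)
qed

lemma expectation_miss_le_cost_potential:
  assumes R: "valid_alg k R" and P: "finite P" "card P = Suc k"
    and ys: "distinct (ys @ [x])" "set (ys @ [x]) \<subseteq> P" "length ys < k"
  shows "measure_pmf.expectation (run_alg R [] w) (\<lambda>h. real (hist_faults h) + miss h x)
    \<le> cost_potential R (w @ (x, False) # map (\<lambda>y. (y, b)) (ys @ [x])) (P - set (ys @ [x]))"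
proof -
  let ?block = "(x, False) # map (\<lambda>y. (y, b)) (ys @ [x])"
  define Q where "Q h' = real (hist_faults h') + potential (P - set (ys @ [x])) (last_cache h')" for h'
  define B where "B = real (length (w @ ?block)) + 1"
  have Q_bound: "\<bar>Q h'\<bar> \<le> B" if "h' \<in> set_pmf (run_alg R [] (w @ ?block))" for h'
  proof -
    have "real (hist_faults h') \<le> real (length (w @ ?block))"
      using hist_faults_le_length[of h'] length_run_alg[OF that] by simp
    then show ?thesis
      using abs_potential_le_1[of "P - set (ys @ [x])" "last_cache h'"]
      unfolding Q_def B_def by (simp add: abs_le_iff)
  qed
  have Q_bound': "\<bar>Q h'\<bar> \<le> B"
    if "h \<in> set_pmf (run_alg R [] w)" "h' \<in> set_pmf (run_alg R h ?block)" for h h'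
    using that by (intro Q_bound) (auto simp: run_alg_append)
  have "measure_pmf.expectation (run_alg R [] w) (\<lambda>h. real (hist_faults h) + miss h x)
      \<le> measure_pmf.expectation (run_alg R [] w) (\<lambda>h. measure_pmf.expectation (run_alg R h ?block) Q)"
  proof (rule expectation_pmf_mono)
    show "integrable (measure_pmf (run_alg R [] w)) (\<lambda>h. real (hist_faults h) + miss h x)"
      by (rule integrable_run_alg_faults_plus) (simp add: miss_def)
    show "integrable (measure_pmf (run_alg R [] w)) (\<lambda>h. measure_pmf.expectation (run_alg R h ?block) Q)"
      by (rule integrable_pmf_bounded, rule expectation_pmf_abs_le, rule Q_bound')
    show "real (hist_faults h) + miss h x \<le> measure_pmf.expectation (run_alg R h ?block) Q" for h
      unfolding Q_def by (rule miss_le_expectation_after_block[OF R P ys])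
  qed
  also have "\<dots> = cost_potential R (w @ ?block) (P - set (ys @ [x]))"
    unfolding cost_potential_def run_alg_append Q_def[symmetric]
    by (rule expectation_bind_pmf[symmetric, where B=B]) (metis Q_bound run_alg_append)
  finally show ?thesis .
qed

lemma exists_candidate_with_gain:
  assumes U: "finite U" "card U \<ge> 1"
    and g: "\<And>x. x \<in> U \<Longrightarrow>
      measure_pmf.expectation (run_alg R [] w) (\<lambda>h. real (hist_faults h) + miss h x) \<le> g x"
  shows "\<exists>x\<in>U. cost_potential R w U + 1 / real (card U) \<le> g x"
proof (rule ccontr)
  let ?E = "measure_pmf.expectation (run_alg R [] w)"
  have int: "integrable (measure_pmf (run_alg R [] w))
      (\<lambda>h. real (hist_faults h) + potential U (last_cache h))"
    by (rule integrable_run_alg_faults_plus[OF abs_potential_le_1])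
  assume "\<not> ?thesis"
  then have "(\<Sum>x\<in>U. g x) < (\<Sum>x\<in>U. cost_potential R w U + 1 / real (card U))"
    using U by (intro sum_strict_mono) auto
  also have "\<dots> = real (card U) * cost_potential R w U + 1"
    using U(2) by (simp add: field_simps)
  also have "\<dots> = ?E (\<lambda>h. real (card U) * (real (hist_faults h) + potential U (last_cache h)) + 1)"
    unfolding cost_potential_def using int by simp
  also have "\<dots> \<le> ?E (\<lambda>h. \<Sum>x\<in>U. real (hist_faults h) + miss h x)"
  proof (rule expectation_pmf_mono)
    show "integrable (measure_pmf (run_alg R [] w))
        (\<lambda>h. real (card U) * (real (hist_faults h) + potential U (last_cache h)) + 1)"
      using int by simp
    show "integrable (measure_pmf (run_alg R [] w)) (\<lambda>h. \<Sum>x\<in>U. real (hist_faults h) + miss h x)"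
      by (intro Bochner_Integration.integrable_sum integrable_run_alg_faults_plus) (simp add: miss_def)
    have "(\<Sum>x\<in>U. miss h x) = real (card (U - last_cache h))" for h
      using U(1) by (simp add: miss_def sum.If_cases Diff_eq)
    then show "real (card U) * (real (hist_faults h) + potential U (last_cache h)) + 1
        \<le> (\<Sum>x\<in>U. real (hist_faults h) + miss h x)" for h
      using potential_le_misses[OF U, of "last_cache h"] by (simp add: sum.distrib algebra_simps)
  qed
  also have "\<dots> = (\<Sum>x\<in>U. ?E (\<lambda>h. real (hist_faults h) + miss h x))"
    by (rule Bochner_Integration.integral_sum) (intro integrable_run_alg_faults_plus, simp add: miss_def)
  also have "\<dots> \<le> (\<Sum>x\<in>U. g x)"
    by (rule sum_mono) (rule g)
  finally show False by simp
qed

text \<open>Re-requesting the prefix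
xs!0, ..., xs!j after each new page is what later forces LFD to evict only at phase starts.\<close>

definition phase_block :: "nat \<Rightarrow> bool \<Rightarrow> 'p list \<Rightarrow> nat \<Rightarrow> ('p \<times> bool) list" where
  "phase_block k m xs j = (xs ! j, False) # map (\<lambda>y. (y, m \<and> Suc j = k)) (take (Suc j) xs)"

definition phase_requests :: "nat \<Rightarrow> bool \<Rightarrow> 'p list \<Rightarrow> ('p \<times> bool) list" where
  "phase_requests k m xs = concat (map (phase_block k m xs) [0..<k])"

definition valid_phase :: "nat \<Rightarrow> 'p set \<Rightarrow> 'p set \<Rightarrow> 'p list \<Rightarrow> bool" where
  "valid_phase k P S xs \<longleftrightarrow> length xs = k \<and> distinct xs \<and> set xs \<subseteq> P \<and> hd xs \<notin> S"

fun phase_chain :: "nat \<Rightarrow> 'p set \<Rightarrow> 'p set \<Rightarrow> 'p list list \<Rightarrow> bool" where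
  "phase_chain k P S [] = True"
| "phase_chain k P S (xs # XS) \<longleftrightarrow> valid_phase k P S xs \<and> phase_chain k P (set xs) XS"

definition candidates :: "'p set \<Rightarrow> 'p set \<Rightarrow> 'p list \<Rightarrow> 'p set" where
  "candidates P S ys = (if ys = [] then P - S else P - set ys)"

definition num_candidates :: "nat \<Rightarrow> nat \<Rightarrow> nat" where
  "num_candidates k j = (if j = 0 then 1 else Suc k - j)"

lemma card_candidates:
  assumes "finite P" "card P = Suc k" "S \<subseteq> P" "card S = k" "distinct ys" "set ys \<subseteq> P"
  shows "card (candidates P S ys) = num_candidates k (length ys)"
  using assms card_Diff_subset[OF finite_subset[of S P] \<open>S \<subseteq> P\<close>]
    card_Diff_subset[of "set ys" P] distinct_card[of ys]
  by (auto simp: candidates_def num_candidates_def)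

lemma sum_inverse_num_candidates:
  assumes "1 \<le> k"
  shows "(\<Sum>j<k. 1 / real (num_candidates k j)) = harm k"
proof -
  have "{..<k} = insert 0 {1..<k}" "{1..k} = insert 1 {2..k}"
    using assms by auto
  moreover have "(\<Sum>j\<in>{1..<k}. 1 / real (Suc k - j)) = (\<Sum>i\<in>{2..k}. 1 / real i)"
    by (rule sum.reindex_bij_witness[where i="\<lambda>i. Suc k - i" and j="\<lambda>j. Suc k - j"]) auto
  ultimately show ?thesis
    by (simp add: num_candidates_def harm_def divide_inverse)
qed

lemma candidates_extend:
  "x \<in> candidates P S ys \<Longrightarrow> distinct ys \<Longrightarrow> set ys \<subseteq> P \<Longrightarrow> (ys \<noteq> [] \<Longrightarrow> hd ys \<notin> S) \<Longrightarrow>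
    distinct (ys @ [x]) \<and> set (ys @ [x]) \<subseteq> P \<and> hd (ys @ [x]) \<notin> S"
  by (auto simp: candidates_def split: if_splits)

lemma exists_candidate_block_gain:
  assumes R: "valid_alg k R" and P: "finite P" "card P = Suc k" and S: "S \<subseteq> P" "card S = k"
    and ys: "distinct ys" "set ys \<subseteq> P" "length ys < k" "ys \<noteq> [] \<Longrightarrow> hd ys \<notin> S"
  shows "\<exists>x\<in>candidates P S ys.
    cost_potential R w (candidates P S ys) + 1 / real (num_candidates k (length ys))
    \<le> cost_potential R (w @ (x, False) # map (\<lambda>y. (y, b)) (ys @ [x])) (P - set (ys @ [x]))"
proof -
  have U: "finite (candidates P S ys)" "card (candidates P S ys) = num_candidates k (length ys)"
    using P card_candidates[OF P S ys(1,2)] by (auto simp: candidates_def)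
  show ?thesis
  proof (rule exists_candidate_with_gain[OF U(1), unfolded U(2)])
    show "num_candidates k (length ys) \<ge> 1"
      using ys(3) by (auto simp: num_candidates_def)
    fix x assume "x \<in> candidates P S ys"
    from candidates_extend[OF this ys(1,2,4)] show "measure_pmf.expectation (run_alg R [] w)
        (\<lambda>h. real (hist_faults h) + miss h x)
      \<le> cost_potential R (w @ (x, False) # map (\<lambda>y. (y, b)) (ys @ [x])) (P - set (ys @ [x]))"
      by (intro expectation_miss_le_cost_potential[OF R P _ _ ys(3)]) auto
  qed
qed

lemma adversary_phase_completion:
  assumes R: "valid_alg k R" and P: "finite P" "card P = Suc k" and S: "S \<subseteq> P" "card S = k"
    and k: "1 \<le> k"
  shows "distinct ys \<Longrightarrow> set ys \<subseteq> P \<Longrightarrow> length ys \<le> k \<Longrightarrow> (ys \<noteq> [] \<Longrightarrow> hd ys \<notin> S) \<Longrightarrow>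
    \<exists>zs. valid_phase k P S (ys @ zs) \<and>
      cost_potential R w (candidates P S ys) + (\<Sum>j\<in>{length ys..<k}. 1 / real (num_candidates k j))
      \<le> cost_potential R (w @ concat (map (phase_block k m (ys @ zs)) [length ys..<k]))
           (P - set (ys @ zs))"
proof (induction "k - length ys" arbitrary: ys w)
  case 0
  then have "length ys = k" "ys \<noteq> []" using k by auto
  with 0 show ?case by (intro exI[of _ "[]"]) (simp add: valid_phase_def candidates_def)
next
  case (Suc d)
  let ?block = "\<lambda>x. (x, False) # map (\<lambda>y. (y, m \<and> Suc (length ys) = k)) (ys @ [x])"
  have "length ys < k" using Suc.hyps(2) by simp
  then obtain x where x: "x \<in> candidates P S ys" and gain:
    "cost_potential R w (candidates P S ys) + 1 / real (num_candidates k (length ys))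
     \<le> cost_potential R (w @ ?block x) (P - set (ys @ [x]))"
    using exists_candidate_block_gain[OF R P S Suc.prems(1,2) _ Suc.prems(4)] by blast
  have len: "d = k - length (ys @ [x])" "length (ys @ [x]) \<le> k"
    using Suc.hyps(2) by auto
  obtain zs where zs: "valid_phase k P S ((ys @ [x]) @ zs)" and IH:
    "cost_potential R (w @ ?block x) (candidates P S (ys @ [x]))
       + (\<Sum>j\<in>{length (ys @ [x])..<k}. 1 / real (num_candidates k j))
     \<le> cost_potential R ((w @ ?block x) @
          concat (map (phase_block k m ((ys @ [x]) @ zs)) [length (ys @ [x])..<k]))
          (P - set ((ys @ [x]) @ zs))"
    using Suc.hyps(1)[OF len(1) _ _ len(2)] candidates_extend[OF x Suc.prems(1,2,4)] by blast
  have "phase_block k m (ys @ x # zs) (length ys) = ?block x"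
    by (simp add: phase_block_def)
  moreover have "[length ys..<k] = length ys # [Suc (length ys)..<k]"
    using \<open>length ys < k\<close> by (simp add: upt_conv_Cons)
  moreover have "(\<Sum>j\<in>{length ys..<k}. 1 / real (num_candidates k j))
      = 1 / real (num_candidates k (length ys))
        + (\<Sum>j\<in>{Suc (length ys)..<k}. 1 / real (num_candidates k j))"
    using \<open>length ys < k\<close> by (simp add: sum.atLeast_Suc_lessThan)
  moreover have "candidates P S (ys @ [x]) = P - set (ys @ [x])"
    by (simp add: candidates_def)
  ultimately show ?case
    using gain IH zs by (intro exI[of _ "x # zs"]) simp
qed

lemma cost_potential_le_alg_cost: "cost_potential R w U \<le> alg_cost R w"
  unfolding cost_potential_def alg_cost_def
  by (intro expectation_pmf_mono integrable_run_alg_faults_plus[OF abs_potential_le_1])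
    (auto simp: potential_nonpos integrable_run_alg_faults_plus[where g="\<lambda>_. 0", simplified])

lemma adversary_phases:
  assumes R: "valid_alg k R" and P: "finite P" "card P = Suc k" and S: "S \<subseteq> P" "card S = k"
    and k: "1 \<le> k"
  shows "\<exists>XS U. length XS = N \<and> phase_chain k P S XS \<and>
    cost_potential R w (P - S) + real N * harm k
    \<le> cost_potential R (w @ concat (map (phase_requests k m) XS)) U"
  using S
proof (induction N arbitrary: S w)
  case 0
  then show ?case by (intro exI[of _ "[]"]) auto
next
  case (Suc N)
  obtain xs where xs: "valid_phase k P S xs" and phase:
    "cost_potential R w (P - S) + harm k \<le> cost_potential R (w @ phase_requests k m xs) (P - set xs)"
    using adversary_phase_completion[OF R P Suc.prems k, of "[]" w m]
    by (auto simp: candidates_def atLeast0LessThan sum_inverse_num_candidates[OF k]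
        phase_requests_def)
  then have "set xs \<subseteq> P" "card (set xs) = k"
    by (auto simp: valid_phase_def distinct_card)
  from Suc.IH[OF this, of "w @ phase_requests k m xs"] obtain XS U where
    "length XS = N" "phase_chain k P (set xs) XS"
    "cost_potential R (w @ phase_requests k m xs) (P - set xs) + real N * harm k
     \<le> cost_potential R ((w @ phase_requests k m xs) @ concat (map (phase_requests k m) XS)) U"
    by blast
  with xs phase show ?case
    by (intro exI[of _ "xs # XS"] exI[of _ U]) (auto simp: algebra_simps)
qed

lemma adversary_cost_lower_bound:
  assumes R: "valid_alg k R" and P: "finite P" "card P = Suc k" and S: "S \<subseteq> P" "card S = k"
    and k: "1 \<le> k"
  shows "\<exists>XS. length XS = N \<and> phase_chain k P S XS \<and>
    real N * harm k \<le> alg_cost R (concat (map (phase_requests k m) XS))"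
proof -
  obtain XS U where XS: "length XS = N" "phase_chain k P S XS"
    "cost_potential R [] (P - S) + real N * harm k
     \<le> cost_potential R (concat (map (phase_requests k m) XS)) U"
    using adversary_phases[OF R P S k, of N "[]" m] by auto
  have "card (P - S) = 1"
    using P S card_Diff_subset[OF finite_subset[OF S(1) P(1)] S(1)] by simp
  then have "cost_potential R [] (P - S) = 0"
    by (simp add: cost_potential_def potential_def hist_faults_def last_cache_def)
  with XS cost_potential_le_alg_cost show ?thesis
    by (intro exI[of _ XS]) (auto intro: order_trans)
qed

definition phase_length :: "nat \<Rightarrow> nat" where
  "phase_length k = (\<Sum>j<k. Suc (Suc j))"

lemma twice_le_phase_length: "2 * k \<le> phase_length k"
  unfolding phase_length_def by (induction k) auto

lemma length_concat_phase_blocks: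
  "n \<le> length xs \<Longrightarrow> length (concat (map (phase_block k m xs) [0..<n])) = (\<Sum>j<n. Suc (Suc j))"
  by (induction n) (auto simp: phase_block_def)

context
  fixes k :: nat and m :: bool and xs :: "'p list"
  assumes k: "1 \<le> k" and xs: "length xs = k"
begin

lemma phase_requests_split:
  "phase_requests k m xs =
     concat (map (phase_block k m xs) [0..<k - 1]) @ (xs ! (k - 1), False) # map (\<lambda>y. (y, m)) xs"
proof -
  have "[0..<k] = [0..<k - 1] @ [k - 1]"
    using k by (metis Suc_diff_1 less_le_trans upt_Suc_append zero_le zero_less_one)
  moreover have "phase_block k m xs (k - 1) = (xs ! (k - 1), False) # map (\<lambda>y. (y, m)) xs"
    unfolding phase_block_def using k xs by simp
  ultimately show ?thesis by (simp add: phase_requests_def)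
qed

lemma length_phase_requests_prefix:
  "length (concat (map (phase_block k m xs) [0..<k - 1])) + Suc k = phase_length k"
proof -
  have "phase_length k = (\<Sum>j<k - 1. Suc (Suc j)) + Suc (Suc (k - 1))"
    unfolding phase_length_def using k by (metis Suc_diff_1 less_le_trans sum.lessThan_Suc zero_less_one)
  then show ?thesis using k xs by (simp add: length_concat_phase_blocks)
qed

lemma length_phase_requests: "length (phase_requests k m xs) = phase_length k"
  using length_phase_requests_prefix xs by (simp add: phase_requests_split)

lemma snd_phase_requests:
  assumes "r < phase_length k"
  shows "snd (phase_requests k m xs ! r) = (m \<and> phase_length k - k \<le> r)"
proof -
  let ?pre = "concat (map (phase_block k m xs) [0..<k - 1]) @ [(xs ! (k - 1), False)]"
  have split: "phase_requests k m xs = ?pre @ map (\<lambda>y. (y, m)) xs"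
    by (simp add: phase_requests_split)
  have len: "length ?pre = phase_length k - k"
    using length_phase_requests_prefix by simp
  show ?thesis
  proof (cases "r < length ?pre")
    case True
    then have "phase_requests k m xs ! r \<in> set ?pre"
      unfolding split nth_append_left[OF True] by (rule nth_mem)
    then show ?thesis
      using True len by (auto simp: phase_block_def)
  next
    case False
    then show ?thesis
      unfolding split using assms len xs by (simp add: nth_append)
  qed
qed

lemma fst_phase_requests_final_block:
  assumes "t < k"
  shows "fst (phase_requests k m xs ! (phase_length k - k + t)) = xs ! t"
proof -
  let ?pre = "concat (map (phase_block k m xs) [0..<k - 1]) @ [(xs ! (k - 1), False)]"
  have "phase_requests k m xs = ?pre @ map (\<lambda>y. (y, m)) xs"
    by (simp add: phase_requests_split)
  moreover have "phase_length k - k + t = length ?pre + t"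
    using length_phase_requests_prefix by simp
  ultimately show ?thesis
    using assms xs by (simp only: nth_append_length_plus) simp
qed

lemma fst_phase_requests_0: "fst (phase_requests k m xs ! 0) = hd xs"
proof -
  have "[0..<k] = 0 # [1..<k]" using k by (simp add: upt_conv_Cons)
  moreover have "xs \<noteq> []" using k xs by auto
  ultimately show ?thesis
    by (simp add: phase_requests_def phase_block_def hd_conv_nth)
qed

lemma set_phase_requests: "set (map fst (phase_requests k m xs)) = set xs"
proof
  show "set (map fst (phase_requests k m xs)) \<subseteq> set xs"
    using xs by (auto simp: phase_requests_def phase_block_def dest: in_set_takeD)
  show "set xs \<subseteq> set (map fst (phase_requests k m xs))"
    by (auto simp: phase_requests_split)
qed

end

lemma phase_chain_nth:
  "phase_chain k P S XS \<Longrightarrow> p < length XS \<Longrightarrow>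
     valid_phase k P (if p = 0 then S else set (XS ! (p - 1))) (XS ! p)"
proof (induction XS arbitrary: S p)
  case Nil
  then show ?case by simp
next
  case (Cons xs XS)
  show ?case
  proof (cases p)
    case (Suc q)
    with Cons.prems Cons.IH[of "set xs" q] show ?thesis by (cases q) auto
  qed (use Cons.prems in simp)
qed

lemma length_concat_same_length:
  "(\<forall>xs\<in>set xss. length xs = L) \<Longrightarrow> length (concat xss) = length xss * L"
  by (induction xss) auto

lemma nth_concat_same_length:
  "(\<forall>xs\<in>set xss. length xs = L) \<Longrightarrow> p < length xss \<Longrightarrow> r < L \<Longrightarrow>
     concat xss ! (p * L + r) = xss ! p ! r"
proof (induction xss arbitrary: p)
  case Nil
  then show ?case by simp
next
  case (Cons xs xss)
  then show ?case
    by (cases p) (auto simp: nth_append add.assoc)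
qed

section \<open>Longest forward distance\<close>

definition lfd_victim :: "('p list \<Rightarrow> nat \<Rightarrow> 'p set \<Rightarrow> 'p) \<Rightarrow> 'p list \<Rightarrow> nat \<Rightarrow> 'p set \<Rightarrow> 'p" where
  "lfd_victim tie I i C = (let F = {q \<in> C. q \<notin> set (drop (Suc i) I)}
     in if F \<noteq> {} then tie I i F else arg_max_on (next_req I i) C)"

definition lfd_evicts :: "nat \<Rightarrow> ('p list \<Rightarrow> nat \<Rightarrow> 'p set \<Rightarrow> 'p) \<Rightarrow> 'p list \<Rightarrow> nat \<Rightarrow> bool" where
  "lfd_evicts k tie I s \<longleftrightarrow> I ! s \<notin> lfd_cache k tie I s \<and> k \<le> card (lfd_cache k tie I s)"

lemma lfd_step_eq:
  "lfd_step k tie I i C =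
     (if I ! i \<in> C then C else if card C < k then insert (I ! i) C
      else insert (I ! i) (C - {lfd_victim tie I i C}))"
  by (simp add: lfd_step_def lfd_victim_def Let_def)

lemma arg_max_on_nat:
  fixes f :: "'a \<Rightarrow> nat"
  assumes "finite C" "C \<noteq> {}"
  shows "arg_max_on f C \<in> C \<and> (\<forall>y\<in>C. f y \<le> f (arg_max_on f C))"
proof -
  obtain c where "c \<in> C" using assms by auto
  moreover have "\<forall>y. y \<in> C \<longrightarrow> f y < Suc (Max (f ` C))"
    using assms by (auto simp: le_imp_less_Suc)
  ultimately show ?thesis
    using arg_max_nat_lemma[of "\<lambda>x. x \<in> C"] unfolding arg_max_on_def by blast
qed

lemma in_set_drop_Suc_iff: "q \<in> set (drop (Suc i) I) \<longleftrightarrow> (\<exists>t. i < t \<and> t < length I \<and> I ! t = q)"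
proof
  assume "q \<in> set (drop (Suc i) I)"
  then obtain t where "t < length (drop (Suc i) I)" "drop (Suc i) I ! t = q"
    by (auto simp: in_set_conv_nth)
  then show "\<exists>t. i < t \<and> t < length I \<and> I ! t = q"
    by (intro exI[of _ "Suc i + t"]) auto
next
  assume "\<exists>t. i < t \<and> t < length I \<and> I ! t = q"
  then obtain t where "i < t" "t < length I" "I ! t = q" by blast
  then have "drop (Suc i) I ! (t - Suc i) = q" "t - Suc i < length (drop (Suc i) I)" by auto
  then show "q \<in> set (drop (Suc i) I)" by (metis nth_mem)
qed

lemma lfd_victim_in:
  assumes "valid_tie tie" "finite C" "C \<noteq> {}"
  shows "lfd_victim tie I i C \<in> C"
proof (cases "{q \<in> C. q \<notin> set (drop (Suc i) I)} = {}")
  case False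
  moreover have "finite {q \<in> C. q \<notin> set (drop (Suc i) I)}" using assms(2) by simp
  ultimately have "tie I i {q \<in> C. q \<notin> set (drop (Suc i) I)} \<in> {q \<in> C. q \<notin> set (drop (Suc i) I)}"
    using assms(1) unfolding valid_tie_def by blast
  then show ?thesis using False by (simp add: lfd_victim_def Let_def)
qed (use arg_max_on_nat[OF assms(2,3)] in \<open>simp add: lfd_victim_def Let_def\<close>)

lemma lfd_victim_not_requested_again:
  assumes "valid_tie tie" "finite C" "q \<in> C" "q \<notin> set (drop (Suc i) I)"
  shows "lfd_victim tie I i C \<notin> set (drop (Suc i) I)"
proof -
  let ?F = "{q \<in> C. q \<notin> set (drop (Suc i) I)}"
  have "?F \<noteq> {}" "finite ?F" using assms by auto
  then have "tie I i ?F \<in> ?F" using assms(1) unfolding valid_tie_def by blast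
  with \<open>?F \<noteq> {}\<close> show ?thesis by (simp add: lfd_victim_def Let_def)
qed

lemma next_req_le_lfd_victim:
  assumes "finite C" "\<forall>q\<in>C. q \<in> set (drop (Suc i) I)" "y \<in> C"
  shows "next_req I i y \<le> next_req I i (lfd_victim tie I i C)"
proof -
  have "{q \<in> C. q \<notin> set (drop (Suc i) I)} = {}" using assms(2) by auto
  then show ?thesis
    using arg_max_on_nat[OF assms(1), of "next_req I i"] assms(3)
    by (auto simp: lfd_victim_def Let_def)
qed

lemma next_req_le: "i < t \<Longrightarrow> t < length I \<Longrightarrow> I ! t = q \<Longrightarrow> next_req I i q \<le> t"
  unfolding next_req_def by (rule Least_le) auto

lemma le_next_req:
  assumes "\<exists>t. i < t \<and> t < length I \<and> I ! t = q"
    and "\<And>t. i < t \<Longrightarrow> t < length I \<Longrightarrow> I ! t = q \<Longrightarrow> X \<le> t"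
  shows "X \<le> next_req I i q"
  unfolding next_req_def by (rule LeastI2_ex[OF assms(1)]) (use assms(2) in auto)

lemma next_or_end_le_length: "next_or_end I i \<le> length I"
proof (cases "\<exists>j. i < j \<and> j < length I \<and> I ! j = I ! i")
  case True
  then have "next_req I i (I ! i) < length I"
    unfolding next_req_def by (rule LeastI2_ex) auto
  then show ?thesis using True by (simp add: next_or_end_def)
next
  case False
  then have "next_or_end I i = length I" unfolding next_or_end_def by (rule if_not_P)
  then show ?thesis by simp
qed

lemma next_or_end_no_request:
  assumes "i < j" "j < next_or_end I i"
  shows "I ! j \<noteq> I ! i"
proof
  assume "I ! j = I ! i"
  with assms next_or_end_le_length[of I i] have "next_req I i (I ! i) \<le> j"
    by (intro next_req_le) auto
  with assms show False
    using \<open>I ! j = I ! i\<close> next_or_end_le_length[of I i] by (auto simp: next_or_end_def split: if_splits)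
qed

lemma less_next_or_end:
  assumes "i < j" "j < length I" "\<And>t. i < t \<Longrightarrow> t \<le> j \<Longrightarrow> I ! t \<noteq> I ! i"
  shows "j < next_or_end I i"
proof (cases "\<exists>t. i < t \<and> t < length I \<and> I ! t = I ! i")
  case True
  have "Suc j \<le> next_req I i (I ! i)"
    by (rule le_next_req[OF True]) (use assms(3) not_less_eq_eq in blast)
  then show ?thesis using True by (simp add: next_or_end_def)
next
  case False
  then have "next_or_end I i = length I" unfolding next_or_end_def by (rule if_not_P)
  then show ?thesis using assms(2) by simp
qed

context
  fixes k :: nat and tie :: "'p list \<Rightarrow> nat \<Rightarrow> 'p set \<Rightarrow> 'p" and I :: "'p list"
  assumes k: "1 \<le> k" and tie: "valid_tie tie"
begin

lemma lfd_step_finite_card: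
  assumes "finite C" "card C \<le> k"
  shows "finite (lfd_step k tie I i C) \<and>
    card (lfd_step k tie I i C) = (if I ! i \<notin> C \<and> card C < k then Suc (card C) else card C)"
proof (cases "I ! i \<in> C \<or> card C < k")
  case False
  then have "C \<noteq> {}" using k by auto
  then have "lfd_victim tie I i C \<in> C" by (rule lfd_victim_in[OF tie assms(1)])
  then have "0 < card C" using assms(1) card_gt_0_iff by blast
  with \<open>lfd_victim tie I i C \<in> C\<close> False assms show ?thesis
    by (auto simp: lfd_step_eq card_insert_if card_Diff_singleton card_gt_0_iff)
qed (use assms in \<open>auto simp: lfd_step_eq\<close>)

lemma lfd_cache_finite_card: "finite (lfd_cache k tie I i) \<and> card (lfd_cache k tie I i) \<le> k"
  by (induction i) (auto simp: lfd_step_finite_card)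

lemma lfd_cache_Suc_subset: "lfd_cache k tie I (Suc i) \<subseteq> insert (I ! i) (lfd_cache k tie I i)"
  by (auto simp: lfd_step_eq)

lemma request_in_lfd_cache_Suc: "I ! i \<in> lfd_cache k tie I (Suc i)"
  by (auto simp: lfd_step_eq)

lemma lfd_cache_subset_requested: "i \<le> length I \<Longrightarrow> lfd_cache k tie I i \<subseteq> set (take i I)"
proof (induction i)
  case (Suc i)
  then show ?case
    using lfd_cache_Suc_subset[of i] by (auto simp: take_Suc_conv_app_nth)
qed simp

lemma lfd_cache_leaves_evicts:
  assumes "v \<in> lfd_cache k tie I s" "v \<notin> lfd_cache k tie I (Suc s)"
  shows "lfd_evicts k tie I s \<and> v = lfd_victim tie I s (lfd_cache k tie I s)"
  using assms unfolding lfd_evicts_def by (auto simp: lfd_step_eq split: if_splits)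

lemma lfd_evicts_victim:
  assumes "lfd_evicts k tie I s"
  shows "lfd_victim tie I s (lfd_cache k tie I s) \<in> lfd_cache k tie I s
    \<and> lfd_victim tie I s (lfd_cache k tie I s) \<notin> lfd_cache k tie I (Suc s)"
proof -
  have "lfd_cache k tie I s \<noteq> {}" using assms k unfolding lfd_evicts_def by auto
  then have "lfd_victim tie I s (lfd_cache k tie I s) \<in> lfd_cache k tie I s"
    using lfd_victim_in[OF tie] lfd_cache_finite_card by blast
  then show ?thesis using assms unfolding lfd_evicts_def by (auto simp: lfd_step_eq)
qed

lemma lfd_cache_leaves_between:
  assumes "v \<in> lfd_cache k tie I a" "v \<notin> lfd_cache k tie I b" "a \<le> b"
  shows "\<exists>s. a \<le> s \<and> s < b \<and> v \<in> lfd_cache k tie I s \<and> v \<notin> lfd_cache k tie I (Suc s)"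
  using assms
proof (induction b)
  case (Suc b)
  show ?case
  proof (cases "a = Suc b")
    case False
    then have "a \<le> b" using Suc.prems by simp
    show ?thesis
    proof (cases "v \<in> lfd_cache k tie I b")
      case True
      then show ?thesis using Suc.prems \<open>a \<le> b\<close> by (intro exI[of _ b]) auto
    next
      case False
      from Suc.IH[OF Suc.prems(1) False \<open>a \<le> b\<close>] show ?thesis by (metis less_Suc_eq)
    qed
  qed (use Suc.prems in simp)
qed simp

lemma lfd_cache_stays:
  assumes "v \<in> lfd_cache k tie I a" "a \<le> b" "\<And>s. a \<le> s \<Longrightarrow> s < b \<Longrightarrow> \<not> lfd_evicts k tie I s"
  shows "v \<in> lfd_cache k tie I b"
  using lfd_cache_leaves_between[OF assms(1) _ assms(2)] lfd_cache_leaves_evicts assms(3) by blast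


lemma card_fills_le_card_lfd_cache:
  "card {i. i < n \<and> I ! i \<notin> lfd_cache k tie I i \<and> card (lfd_cache k tie I i) < k}
   \<le> card (lfd_cache k tie I n)"
proof (induction n)
  case (Suc n)
  let ?fill = "I ! n \<notin> lfd_cache k tie I n \<and> card (lfd_cache k tie I n) < k"
  have "card (lfd_cache k tie I (Suc n))
      = (if ?fill then Suc (card (lfd_cache k tie I n)) else card (lfd_cache k tie I n))"
    using lfd_step_finite_card lfd_cache_finite_card by simp
  moreover have "{i. i < Suc n \<and> I ! i \<notin> lfd_cache k tie I i \<and> card (lfd_cache k tie I i) < k}
      = (if ?fill then insert n else id)
          {i. i < n \<and> I ! i \<notin> lfd_cache k tie I i \<and> card (lfd_cache k tie I i) < k}"
    by (auto simp: less_Suc_eq)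
  ultimately show ?case using Suc by simp
qed simp

lemma lfd_valid_run:
  "j \<le> length I \<Longrightarrow>
    valid_run k (lfd_cache k tie I j) (zip (drop j I) (map (\<lambda>i. lfd_cache k tie I (Suc i)) [j..<length I]))
    \<and> fault_count (lfd_cache k tie I j)
        (zip (drop j I) (map (\<lambda>i. lfd_cache k tie I (Suc i)) [j..<length I]))
      = card {i. j \<le> i \<and> i < length I \<and> I ! i \<notin> lfd_cache k tie I i}"
proof (induction "length I - j" arbitrary: j)
  case (Suc d)
  then have j: "j < length I" by simp
  have "zip (drop j I) (map (\<lambda>i. lfd_cache k tie I (Suc i)) [j..<length I]) =
      (I ! j, lfd_cache k tie I (Suc j)) #
        zip (drop (Suc j) I) (map (\<lambda>i. lfd_cache k tie I (Suc i)) [Suc j..<length I])"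
    using j by (simp add: Cons_nth_drop_Suc[symmetric] upt_conv_Cons)
  moreover have "{i. j \<le> i \<and> i < length I \<and> I ! i \<notin> lfd_cache k tie I i} =
      (if I ! j \<notin> lfd_cache k tie I j then insert j else id)
        {i. Suc j \<le> i \<and> i < length I \<and> I ! i \<notin> lfd_cache k tie I i}"
    using j by (auto simp: Suc_le_eq order.order_iff_strict)
  ultimately show ?case
    using Suc.hyps(1)[of "Suc j"] Suc.hyps(2) request_in_lfd_cache_Suc[of j]
      lfd_cache_finite_card[of "Suc j"] lfd_cache_Suc_subset[of j]
    by auto
qed simp

lemma opt_le_lfd_faults: "opt k I \<le> card {i. i < length I \<and> I ! i \<notin> lfd_cache k tie I i}"
proof -
  define cs where "cs = map (\<lambda>i. lfd_cache k tie I (Suc i)) [0..<length I]"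
  have "length cs = length I \<and> valid_run k {} (zip I cs)
      \<and> fault_count {} (zip I cs) = card {i. i < length I \<and> I ! i \<notin> lfd_cache k tie I i}"
    using lfd_valid_run[of 0] unfolding cs_def by simp
  then show ?thesis unfolding opt_def by (intro Least_le exI[of _ cs]) auto
qed

lemma opt_le_k_plus_lfd_evictions:
  "opt k I \<le> k + card {i. i < length I \<and> lfd_evicts k tie I i}"
proof -
  let ?faults = "{i. i < length I \<and> I ! i \<notin> lfd_cache k tie I i}"
  let ?fills = "{i. i < length I \<and> I ! i \<notin> lfd_cache k tie I i \<and> card (lfd_cache k tie I i) < k}"
  let ?evictions = "{i. i < length I \<and> lfd_evicts k tie I i}"
  have "card ?faults \<le> card (?fills \<union> ?evictions)"
    by (rule card_mono) (auto simp: lfd_evicts_def)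
  also have "\<dots> \<le> card ?fills + card ?evictions"
    by (rule card_Un_le)
  also have "card ?fills \<le> k"
    using card_fills_le_card_lfd_cache[of "length I"] lfd_cache_finite_card[of "length I"] by linarith
  finally show ?thesis using opt_le_lfd_faults by linarith
qed

lemma discard_pstar_evicted:
  assumes "discard_pstar k tie I i"
  shows "\<exists>s. i < s \<and> s < next_or_end I i \<and> lfd_evicts k tie I s
    \<and> I ! i = lfd_victim tie I s (lfd_cache k tie I s)"
proof -
  from assms obtain j where j: "i < j" "j \<le> next_or_end I i" "I ! i \<notin> lfd_cache k tie I j"
    unfolding discard_pstar_def by blast
  from lfd_cache_leaves_between[OF request_in_lfd_cache_Suc j(3)] j(1) obtain s
    where "Suc i \<le> s" "s < j" "I ! i \<in> lfd_cache k tie I s" "I ! i \<notin> lfd_cache k tie I (Suc s)"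
    by auto
  with lfd_cache_leaves_evicts j show ?thesis by (intro exI[of _ s]) auto
qed

end

lemma phase_chain_length: "phase_chain k P S XS \<Longrightarrow> xs \<in> set XS \<Longrightarrow> length xs = k"
  by (induction XS arbitrary: S) (auto simp: valid_phase_def)

text \<open>W is the adversarial sequence, with predictions, made of the phases XS, and I its
requests; request p * L + r is the r-th request of phase p, whose pages are pages p.\<close>

locale adversary_run =
  fixes k :: nat and P :: "'p set" and S0 :: "'p set" and XS :: "'p list list"
    and tie :: "'p list \<Rightarrow> nat \<Rightarrow> 'p set \<Rightarrow> 'p" and m :: bool
  assumes k: "1 \<le> k" and P: "finite P" "card P = Suc k"
    and chain: "phase_chain k P S0 XS" and tie: "valid_tie tie"
begin

definition L where "L = phase_length k"
definition N where "N = length XS"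
definition W where "W = concat (map (phase_requests k m) XS)"
definition I where "I = map fst W"
definition pages where "pages p = set (XS ! p)"

abbreviation cache where "cache s \<equiv> lfd_cache k tie I s"
abbreviation evicts where "evicts s \<equiv> lfd_evicts k tie I s"

lemma k_less_L: "k < L"
  using twice_le_phase_length[of k] k unfolding L_def by linarith

lemma valid_phase_nth: "p < N \<Longrightarrow> valid_phase k P (if p = 0 then S0 else pages (p - 1)) (XS ! p)"
  using phase_chain_nth[OF chain] unfolding N_def pages_def by blast

lemma finite_card_pages: "p < N \<Longrightarrow> finite (pages p) \<and> card (pages p) = k \<and> pages p \<subseteq> P"
  using valid_phase_nth[of p] distinct_card[of "XS ! p"] unfolding pages_def valid_phase_def by auto

lemma hd_in_pages: "p < N \<Longrightarrow> hd (XS ! p) \<in> pages p"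
  using valid_phase_nth[of p] k unfolding pages_def valid_phase_def
  by (metis hd_in_set list.size(3) not_one_le_zero)

lemma length_phase_requests_XS: "\<forall>ys\<in>set (map (phase_requests k m) XS). length ys = L"
  using length_phase_requests[OF k] phase_chain_length[OF chain] unfolding L_def by auto

lemma length_W: "length W = N * L"
  unfolding W_def N_def using length_concat_same_length[OF length_phase_requests_XS] by simp

lemma length_I: "length I = N * L"
  unfolding I_def using length_W by simp

lemma position_split: "i < N * L \<Longrightarrow> i = i div L * L + i mod L \<and> i div L < N \<and> i mod L < L"
  using k_less_L by (auto simp: less_mult_imp_div_less)

lemma div_L_eq: "p * L \<le> i \<Longrightarrow> i < Suc p * L \<Longrightarrow> i div L = p"
  using k_less_L by (metis add.commute div_nat_eqI mult.commute mult_Suc)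

lemma W_nth: "p < N \<Longrightarrow> r < L \<Longrightarrow> W ! (p * L + r) = phase_requests k m (XS ! p) ! r"
  unfolding W_def N_def using nth_concat_same_length[OF length_phase_requests_XS] by simp

lemma I_nth: "p < N \<Longrightarrow> r < L \<Longrightarrow> I ! (p * L + r) = fst (phase_requests k m (XS ! p) ! r)"
proof -
  assume "p < N" "r < L"
  then have "p * L + r < N * L"
    by (metis add.commute less_le_trans mult_Suc mult_le_mono1 nat_add_left_cancel_less Suc_leI)
  with \<open>p < N\<close> \<open>r < L\<close> show ?thesis unfolding I_def using W_nth length_W by simp
qed

lemma snd_W: "i < N * L \<Longrightarrow> snd (W ! i) = (m \<and> L - k \<le> i mod L)"
  using position_split[of i] W_nth[of "i div L" "i mod L"] snd_phase_requests[OF k, of "XS ! (i div L)"]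
    valid_phase_nth[of "i div L"] unfolding L_def valid_phase_def by (metis (no_types, lifting))

lemma request_in_pages: "i < N * L \<Longrightarrow> I ! i \<in> pages (i div L)"
  using position_split[of i] I_nth[of "i div L" "i mod L"] set_phase_requests[OF k, of "XS ! (i div L)" m]
    length_phase_requests[OF k, of "XS ! (i div L)" m] valid_phase_nth[of "i div L"]
  unfolding pages_def L_def valid_phase_def by (metis length_map nth_map nth_mem)

lemma request_in_P: "i < N * L \<Longrightarrow> I ! i \<in> P"
  using request_in_pages finite_card_pages position_split by blast

lemma request_phase_start: "p < N \<Longrightarrow> I ! (p * L) = hd (XS ! p)"
  using I_nth[of p 0] k_less_L fst_phase_requests_0[OF k, of "XS ! p" m] valid_phase_nth[of p]
  by (simp add: valid_phase_def)

lemma request_final_block: "p < N \<Longrightarrow> t < k \<Longrightarrow> I ! (p * L + (L - k) + t) = XS ! p ! t"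
  using I_nth[of p "L - k + t"] k_less_L fst_phase_requests_final_block[OF k, of "XS ! p" t m]
    valid_phase_nth[of p] unfolding L_def by (simp add: add.assoc valid_phase_def)

lemma final_block_requests_page: "p < N \<Longrightarrow> v \<in> pages p \<Longrightarrow> \<exists>t<k. I ! (p * L + (L - k) + t) = v"
  using request_final_block valid_phase_nth[of p] unfolding pages_def valid_phase_def
  by (metis in_set_conv_nth)

lemma final_block_position: "t < k \<Longrightarrow> p * L < p * L + (L - k) + t \<and> p * L + (L - k) + t < Suc p * L"
  using k_less_L by auto

lemma P_eq_insert_new_page:
  assumes "0 < p" "p < N"
  shows "P = insert (hd (XS ! p)) (pages (p - 1)) \<and> hd (XS ! p) \<notin> pages (p - 1)"
proof -
  have new: "hd (XS ! p) \<notin> pages (p - 1)"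
    using valid_phase_nth[OF assms(2)] assms(1) by (simp add: valid_phase_def)
  have "insert (hd (XS ! p)) (pages (p - 1)) \<subseteq> P"
    using hd_in_pages[of p] finite_card_pages[of p] finite_card_pages[of "p - 1"] assms by auto
  moreover have "card (insert (hd (XS ! p)) (pages (p - 1))) = Suc k"
    using new finite_card_pages[of "p - 1"] assms by simp
  ultimately show ?thesis using card_subset_eq[OF P(1)] P(2) new by metis
qed

lemma missing_page: "p < N \<Longrightarrow> \<exists>v. P - pages p = {v}"
  using card_Diff_subset[of "pages p" P] finite_card_pages[of p] P by (simp add: card_1_singleton_iff)

lemma lfd_cache_subset_P:
  assumes "s \<le> N * L"
  shows "cache s \<subseteq> P"
proof -
  have "cache s \<subseteq> set (take s I)"
    using lfd_cache_subset_requested[OF k tie] assms length_I by simp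
  also have "\<dots> \<subseteq> P"
    using request_in_P assms length_I by (auto simp: in_set_conv_nth)
  finally show ?thesis .
qed


lemma page_requested_before_next_phase_start:
  assumes "q \<in> P" "Suc p < N"
  shows "\<exists>t. p * L < t \<and> t \<le> Suc p * L \<and> I ! t = q"
proof (cases "q \<in> pages p")
  case True
  with assms(2) obtain t where "t < k" "I ! (p * L + (L - k) + t) = q"
    using final_block_requests_page[of p q] by auto
  then show ?thesis using final_block_position[of t p] by (intro exI[of _ "p * L + (L - k) + t"]) auto
next
  case False
  with assms have "I ! (Suc p * L) = q"
    using P_eq_insert_new_page[of "Suc p"] request_phase_start[of "Suc p"] by auto
  then show ?thesis using k_less_L by (intro exI[of _ "Suc p * L"]) auto
qed

lemma lfd_cache_at_phase_start_eviction:
  assumes p: "p < N" and evicts: "evicts (p * L)"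
  shows "cache (p * L) = P - {hd (XS ! p)}"
proof -
  have s: "p * L < N * L" using p k_less_L by simp
  have miss: "I ! (p * L) \<notin> cache (p * L)" "k \<le> card (cache (p * L))"
    using evicts by (auto simp: lfd_evicts_def)
  have "cache (p * L) = P - {I ! (p * L)}"
  proof (rule card_seteq)
    show "cache (p * L) \<subseteq> P - {I ! (p * L)}"
      using lfd_cache_subset_P[of "p * L"] s miss(1) by auto
    show "card (P - {I ! (p * L)}) \<le> card (cache (p * L))"
      using miss(2) P request_in_P[OF s] by (simp add: card_Diff_singleton)
  qed (use P in simp)
  then show ?thesis using request_phase_start[OF p] by simp
qed

lemma next_req_missing_page:
  assumes p: "p < N" and v: "P - pages p = {v}" and later: "v \<in> set (drop (Suc (p * L)) I)"
  shows "Suc p * L \<le> next_req I (p * L) v"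
proof (rule le_next_req)
  show "\<exists>t>p * L. t < length I \<and> I ! t = v"
    using later unfolding in_set_drop_Suc_iff by blast
  fix t assume t: "p * L < t" "t < length I" "I ! t = v"
  show "Suc p * L \<le> t"
  proof (rule ccontr)
    assume "\<not> Suc p * L \<le> t"
    then have "t div L = p" using t(1) by (intro div_L_eq) auto
    then have "I ! t \<in> pages p" using request_in_pages[of t] t(2) length_I by simp
    then show False using t(3) v by auto
  qed
qed

text \<open>At a phase start the cache holds the page missing from the new phase, which is not
requested before the next phase starts; so LFD prefers to evict it (or a page never requested
again) over any page requested during the phase.\<close>

lemma victim_at_phase_start_not_requested_in_phase:
  assumes p: "p < N" and evicts: "evicts (p * L)" and t: "p * L < t" "t < Suc p * L"
  shows "I ! t \<noteq> lfd_victim tie I (p * L) (cache (p * L))"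
proof
  let ?s = "p * L"
  assume victim: "I ! t = lfd_victim tie I ?s (cache ?s)"
  have "Suc p * L \<le> N * L" using mult_le_mono1[of "Suc p" N L] p by simp
  then have "t < length I" using t(2) length_I by simp
  then have t_later: "I ! t \<in> set (drop (Suc ?s) I)"
    unfolding in_set_drop_Suc_iff using t(1) by blast
  obtain v where v: "P - pages p = {v}" using missing_page[OF p] by blast
  then have v_cached: "v \<in> cache ?s"
    using lfd_cache_at_phase_start_eviction[OF p evicts] hd_in_pages[OF p] by auto
  have finite_cache: "finite (cache ?s)" using lfd_cache_finite_card[OF k tie] by blast
  show False
  proof (cases "\<forall>q\<in>cache ?s. q \<in> set (drop (Suc ?s) I)")
    case False
    then obtain q where "q \<in> cache ?s" "q \<notin> set (drop (Suc ?s) I)" by blast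
    from lfd_victim_not_requested_again[OF tie finite_cache this] victim t_later show False by simp
  next
    case True
    have "Suc p * L \<le> next_req I ?s v"
      using next_req_missing_page[OF p v] True v_cached by blast
    also have "next_req I ?s v \<le> next_req I ?s (lfd_victim tie I ?s (cache ?s))"
      by (rule next_req_le_lfd_victim[OF finite_cache True v_cached])
    also have "\<dots> \<le> t"
      using victim t(1) \<open>t < length I\<close> by (intro next_req_le) auto
    finally show False using t(2) by simp
  qed
qed

lemma first_request_not_lfd_eviction:
  assumes s: "s < N * L" "s div L * L < s" and first: "\<forall>i<s. I ! i \<noteq> I ! s"
  shows "\<not> evicts s"
proof
  assume "evicts s"
  then have miss: "k \<le> card (cache s)" by (simp add: lfd_evicts_def)
  define p where "p = s div L"
  have p: "p < N" "I ! s \<in> pages p" "I ! s \<in> P"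
    using position_split[OF s(1)] request_in_pages[OF s(1)] finite_card_pages[of p] unfolding p_def by auto
  show False
  proof (cases p)
    case 0
    have "set (take s I) \<subseteq> pages 0 - {I ! s}"
    proof
      fix x assume "x \<in> set (take s I)"
      then obtain j where "j < s" "I ! j = x" by (auto simp: in_set_conv_nth)
      moreover have "j div L = 0"
        using \<open>j < s\<close> 0 position_split[OF s(1)] unfolding p_def by (simp add: div_less)
      ultimately show "x \<in> pages 0 - {I ! s}"
        using first request_in_pages[of j] s(1) by auto
    qed
    then have "card (cache s) \<le> card (pages 0 - {I ! s})"
      using lfd_cache_subset_requested[OF k tie, of s I] s(1) length_I finite_card_pages[OF p(1)] 0
      by (intro card_mono) auto
    also have "\<dots> < k"
      using p(2) finite_card_pages[OF p(1)] 0 k by (simp add: card_Diff1_less)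
    finally show False using miss by simp
  next
    case (Suc p')
    then obtain t where "t \<le> p * L" "I ! t = I ! s"
      using page_requested_before_next_phase_start[of "I ! s" p'] p by auto
    then show False using first s(2) unfolding p_def by auto
  qed
qed

lemma rerequest_not_lfd_eviction:
  assumes s: "s < N * L" "s div L * L < s"
    and last: "i < s" "I ! i = I ! s" "\<And>j. i < j \<Longrightarrow> j < s \<Longrightarrow> I ! j \<noteq> I ! s"
    and earlier: "\<And>s'. s' < s \<Longrightarrow> evicts s' \<Longrightarrow> s' mod L = 0"
  shows "\<not> evicts s"
proof
  assume "evicts s"
  define p where "p = s div L"
  have p: "p < N" "I ! s \<in> P"
    using position_split[OF s(1)] request_in_P[OF s(1)] unfolding p_def by auto
  have s_end: "s < Suc p * L"
    using div_mult_mod_eq[of s L] position_split[OF s(1)] unfolding p_def mult_Suc by linarith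
  have "I ! s \<in> cache (Suc i)"
    using request_in_lfd_cache_Suc[OF k tie, of I i] last(2) by simp
  moreover have "I ! s \<notin> cache s" using \<open>evicts s\<close> by (simp add: lfd_evicts_def)
  ultimately obtain s' where s': "Suc i \<le> s'" "s' < s" "I ! s \<in> cache s'" "I ! s \<notin> cache (Suc s')"
    using lfd_cache_leaves_between[OF k tie] Suc_leI[OF last(1)] by blast
  have s'_evicts: "evicts s'" "I ! s = lfd_victim tie I s' (cache s')"
    using lfd_cache_leaves_evicts[OF k tie s'(3,4)] by auto
  define p' where "p' = s' div L"
  have s'_start: "s' = p' * L" "p' \<le> p"
    using earlier[OF s'(2) s'_evicts(1)] div_mult_mod_eq[of s' L] div_le_mono[of s' s L] s'(2)
    unfolding p'_def p_def by auto
  have "p' = p"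
  proof (rule ccontr)
    assume "p' \<noteq> p"
    with s'_start(2) p(1) obtain t where "p' * L < t" "t \<le> Suc p' * L" "I ! t = I ! s"
      using page_requested_before_next_phase_start[of "I ! s" p'] p(2) by auto
    moreover have "Suc p' * L \<le> p * L"
      using mult_le_mono1[of "Suc p'" p L] \<open>p' \<noteq> p\<close> s'_start(2) by simp
    ultimately show False
      using last(3)[of t] s'(1) s'_start(1) s(2) unfolding p_def by simp
  qed
  then show False
    using victim_at_phase_start_not_requested_in_phase[OF p(1) _ _ s_end] s'_evicts s'_start s(2)
    unfolding p_def by simp
qed

lemma lfd_evicts_only_at_phase_starts: "s < N * L \<Longrightarrow> evicts s \<Longrightarrow> s mod L = 0"
proof (induction s rule: less_induct)
  case (less s)
  show ?case
  proof (rule ccontr)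
    assume "s mod L \<noteq> 0"
    then have start: "s div L * L < s" using div_mult_mod_eq[of s L] by linarith
    show False
    proof (cases "\<exists>i<s. I ! i = I ! s")
      case False
      then show False using first_request_not_lfd_eviction[OF less.prems(1) start] less.prems(2) by blast
    next
      case True
      define i where "i = Max {i. i < s \<and> I ! i = I ! s}"
      have "i < s" "I ! i = I ! s"
        using Max_in[of "{i. i < s \<and> I ! i = I ! s}"] True unfolding i_def by auto
      moreover have "I ! j \<noteq> I ! s" if "i < j" "j < s" for j
        using Max_ge[of "{i. i < s \<and> I ! i = I ! s}" j] that unfolding i_def by fastforce
      ultimately show False
        using rerequest_not_lfd_eviction[OF less.prems(1) start] less.IH less.prems by auto
    qed
  qed
qed

lemma lfd_eviction_at_phase_start: "s < N * L \<Longrightarrow> evicts s \<Longrightarrow> s = s div L * L \<and> s div L < N"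
  using lfd_evicts_only_at_phase_starts[of s] position_split[of s] by auto

lemma card_lfd_evictions_le: "card {s. s < N * L \<and> evicts s} \<le> N"
proof -
  have "{s. s < N * L \<and> evicts s} \<subseteq> (\<lambda>p. p * L) ` {..<N}"
    using lfd_eviction_at_phase_start by (auto intro!: image_eqI)
  then have "card {s. s < N * L \<and> evicts s} \<le> card ((\<lambda>p. p * L) ` {..<N})"
    by (rule card_mono[rotated]) simp
  also have "\<dots> \<le> N"
    using card_image_le[of "{..<N}" "\<lambda>p. p * L"] by simp
  finally show ?thesis .
qed

lemma opt_le_k_plus_N: "opt k I \<le> k + N"
  using opt_le_k_plus_lfd_evictions[OF k tie, of I] card_lfd_evictions_le length_I by simp

lemma no_lfd_eviction_inside_phase:
  assumes "p * L < t" "t < Suc p * L" "p < N"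
  shows "\<not> evicts t"
proof
  assume "evicts t"
  have "Suc p * L \<le> N * L" using mult_le_mono1[of "Suc p" N L] assms(3) by simp
  then have "t < N * L" using assms(2) by simp
  moreover have "t div L = p" using assms(1,2) by (intro div_L_eq) auto
  ultimately show False
    using lfd_eviction_at_phase_start \<open>evicts t\<close> assms(1) by fastforce
qed


end

section \<open>Discard predictions on the adversarial sequence\<close>

context adversary_run
begin

lemma discard_pstar_evicted_at_phase_start:
  assumes i: "i < N * L" and pstar: "discard_pstar k tie I i"
  obtains p where "i < Suc p * L" "Suc p * L < next_or_end I i" "Suc p < N"
    "evicts (Suc p * L)" "I ! i \<in> pages p"
proof -
  obtain s where s: "i < s" "s < next_or_end I i" "evicts s"
    "I ! i = lfd_victim tie I s (cache s)"
    using discard_pstar_evicted[OF k tie pstar] by auto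
  have "s < N * L" using s(2) next_or_end_le_length[of I i] length_I by simp
  then obtain p where p: "s = p * L" "p < N" using lfd_eviction_at_phase_start s(3) by blast
  then obtain p' where p': "p = Suc p'" using s(1) by (cases p) auto
  have "I ! i \<in> cache s" using lfd_evicts_victim[OF k tie s(3)] s(4) by simp
  then have "I ! i \<in> pages p'"
    using lfd_cache_at_phase_start_eviction[OF p(2)] P_eq_insert_new_page[of p] p p' s(3) by auto
  with that[of p'] s p p' show thesis by simp
qed

lemma discard_pstar_in_final_block:
  assumes i: "i < N * L" and pstar: "discard_pstar k tie I i"
  shows "L - k \<le> i mod L \<and> Suc (i div L) < N"
proof -
  obtain p where p: "i < Suc p * L" "Suc p * L < next_or_end I i" "Suc p < N" "I ! i \<in> pages p"
    using discard_pstar_evicted_at_phase_start[OF assms] by blast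
  obtain t where t: "t < k" "I ! (p * L + (L - k) + t) = I ! i"
    using final_block_requests_page[of p "I ! i"] p(3,4) by auto
  have "\<not> i < p * L + (L - k) + t"
    using next_or_end_no_request[of i "p * L + (L - k) + t" I] t(2) p(2) final_block_position[OF t(1), of p]
    by auto
  then have "p * L + (L - k) \<le> i" by simp
  moreover have "i div L = p" using calculation p(1) by (intro div_L_eq) auto
  ultimately show ?thesis
    using div_mult_mod_eq[of i L] p(3) by auto
qed

lemma card_discard_pstar_le: "card {i. i < N * L \<and> discard_pstar k tie I i} \<le> N"
proof -
  define A where "A = {i. i < N * L \<and> discard_pstar k tie I i}"
  define evicted_at where
    "evicted_at i = (SOME s. i < s \<and> s < next_or_end I i \<and> evicts s \<and> I ! i = lfd_victim tie I s (cache s))"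
    for i
  have evicted_at: "i < evicted_at i \<and> evicted_at i < next_or_end I i \<and> evicts (evicted_at i)
      \<and> I ! i = lfd_victim tie I (evicted_at i) (cache (evicted_at i))" if "i \<in> A" for i
    unfolding evicted_at_def
    by (rule someI_ex) (use discard_pstar_evicted[OF k tie] that A_def in blast)
  have "inj_on evicted_at A"
  proof (rule inj_onI)
    fix i j assume ij: "i \<in> A" "j \<in> A" "evicted_at i = evicted_at j"
    then have "I ! i = I ! j" using evicted_at by metis
    show "i = j"
    proof (rule ccontr)
      assume "i \<noteq> j"
      then consider "i < j" | "j < i" by linarith
      then show False
        using next_or_end_no_request[of i j I] next_or_end_no_request[of j i I]
          evicted_at[OF ij(1)] evicted_at[OF ij(2)] ij(3) \<open>I ! i = I ! j\<close>
        by cases auto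
    qed
  qed
  moreover have "evicted_at ` A \<subseteq> {s. s < N * L \<and> evicts s}"
    using evicted_at next_or_end_le_length[of I] length_I by (fastforce intro: less_le_trans)
  ultimately have "card A \<le> card {s. s < N * L \<and> evicts s}"
    by (intro card_inj_on_le) auto
  then show ?thesis using card_lfd_evictions_le unfolding A_def by simp
qed

lemma lfd_cache_at_phase_end:
  assumes "Suc p < N"
  shows "cache (Suc p * L) = pages p"
proof (rule card_seteq[symmetric])
  show "pages p \<subseteq> cache (Suc p * L)"
  proof
    fix v assume "v \<in> pages p"
    then obtain t where t: "t < k" "I ! (p * L + (L - k) + t) = v"
      using final_block_requests_page[of p v] assms by auto
    let ?pos = "p * L + (L - k) + t"
    have "v \<in> cache (Suc ?pos)"
      using request_in_lfd_cache_Suc[OF k tie, of I ?pos] t(2) by simp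
    moreover have "\<not> evicts s" if "Suc ?pos \<le> s" "s < Suc p * L" for s
      using no_lfd_eviction_inside_phase[of p s] that assms by simp
    ultimately show "v \<in> cache (Suc p * L)"
      using lfd_cache_stays[OF k tie] final_block_position[OF t(1), of p] by (metis Suc_leI)
  qed
  show "card (cache (Suc p * L)) \<le> card (pages p)"
    using lfd_cache_finite_card[OF k tie] finite_card_pages[of p] assms by simp
qed (use lfd_cache_finite_card[OF k tie] in blast)

text \<open>The page LFD evicts at the start of phase Suc p was last requested in the final block of
phase p, so that request is one LFD discards.\<close>

lemma discard_pstar_in_each_final_block:
  assumes p: "Suc p < N"
  shows "\<exists>i. p * L + (L - k) \<le> i \<and> i < Suc p * L \<and> discard_pstar k tie I i"
proof -
  let ?s = "Suc p * L"
  have new: "I ! ?s = hd (XS ! Suc p)" "hd (XS ! Suc p) \<notin> pages p"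
    using request_phase_start[OF p] P_eq_insert_new_page[of "Suc p"] p by auto
  have "evicts ?s"
    unfolding lfd_evicts_def using lfd_cache_at_phase_end[OF p] new finite_card_pages[of p] p by simp
  define v where "v = lfd_victim tie I ?s (cache ?s)"
  have v: "v \<in> pages p" "v \<notin> cache (Suc ?s)"
    using lfd_evicts_victim[OF k tie \<open>evicts ?s\<close>] lfd_cache_at_phase_end[OF p] unfolding v_def by auto
  obtain t where t: "t < k" "I ! (p * L + (L - k) + t) = v"
    using final_block_requests_page[of p v] p v(1) by auto
  let ?pos = "p * L + (L - k) + t"
  have pos: "p * L < ?pos" "?pos < ?s" using final_block_position[OF t(1)] by auto
  have "?s < next_or_end I ?pos"
  proof (rule less_next_or_end)
    show "?s < length I"
      using p length_I k_less_L by (simp only: mult_less_cancel2) simp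
    fix t' assume t': "?pos < t'" "t' \<le> ?s"
    show "I ! t' \<noteq> I ! ?pos"
    proof (cases "t' = ?s")
      case False
      then obtain u where u: "t' = p * L + (L - k) + u" "t < u" "u < k"
        using t' k_less_L by (intro that[of "t' - (p * L + (L - k))"]) auto
      then show ?thesis
        using request_final_block[of p u] request_final_block[OF _ t(1), of p] p
          valid_phase_nth[of p] nth_eq_iff_index_eq[of "XS ! p" u t]
        by (auto simp: valid_phase_def)
    qed (use new t(2) v(1) in auto)
  qed (use pos in auto)
  then have "discard_pstar k tie I ?pos"
    unfolding discard_pstar_def using pos v(2) t(2) by (intro exI[of _ "Suc ?s"]) auto
  then show ?thesis using pos(2) le_add1 by blast
qed


lemma card_final_block_positions_le: "card {i. i < N * L \<and> L - k \<le> i mod L} \<le> N * k"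
proof -
  have "{i. i < N * L \<and> L - k \<le> i mod L} \<subseteq> (\<lambda>(p, t). p * L + (L - k) + t) ` ({..<N} \<times> {..<k})"
  proof
    fix i assume "i \<in> {i. i < N * L \<and> L - k \<le> i mod L}"
    moreover have "i mod L < L" using k_less_L by simp
    ultimately have i: "i = i div L * L + (L - k) + (i mod L - (L - k))" "i div L < N" "i mod L - (L - k) < k"
      using position_split[of i] by auto
    then show "i \<in> (\<lambda>(p, t). p * L + (L - k) + t) ` ({..<N} \<times> {..<k})"
      by (intro image_eqI[of _ _ "(i div L, i mod L - (L - k))"]) auto
  qed
  then have "card {i. i < N * L \<and> L - k \<le> i mod L}
      \<le> card ((\<lambda>(p, t). p * L + (L - k) + t) ` ({..<N} \<times> {..<k}))"
    by (rule card_mono[rotated]) simp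
  also have "\<dots> \<le> N * k"
    using card_image_le[of "{..<N} \<times> {..<k}" "\<lambda>(p, t). p * L + (L - k) + t"]
    by (simp add: card_cartesian_product)
  finally show ?thesis .
qed

lemma card_discard_pstar_final_block_ge:
  "N - 1 \<le> card {i. i < N * L \<and> L - k \<le> i mod L \<and> discard_pstar k tie I i}"
proof -
  define choice where
    "choice p = (SOME i. p * L + (L - k) \<le> i \<and> i < Suc p * L \<and> discard_pstar k tie I i)" for p
  have choice: "p * L + (L - k) \<le> choice p \<and> choice p < Suc p * L \<and> discard_pstar k tie I (choice p)"
    if "Suc p < N" for p
    unfolding choice_def by (rule someI_ex) (use discard_pstar_in_each_final_block that in blast)
  have choice_div: "choice p div L = p" if "Suc p < N" for p
    using choice[OF that] by (intro div_L_eq) auto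
  have "inj_on choice {p. Suc p < N}"
    by (rule inj_onI) (metis choice_div mem_Collect_eq)
  moreover have "choice ` {p. Suc p < N} \<subseteq> {i. i < N * L \<and> L - k \<le> i mod L \<and> discard_pstar k tie I i}"
  proof clarify
    fix p assume p: "Suc p < N"
    have "Suc p * L \<le> N * L" using mult_le_mono1[of "Suc p" N L] p by simp
    with choice[OF p] choice_div[OF p] show "choice p < N * L \<and> L - k \<le> choice p mod L
        \<and> discard_pstar k tie I (choice p)"
      using div_mult_mod_eq[of "choice p" L] by auto
  qed
  ultimately have "card {p. Suc p < N} \<le> card {i. i < N * L \<and> L - k \<le> i mod L \<and> discard_pstar k tie I i}"
    by (intro card_inj_on_le) auto
  moreover have "{p. Suc p < N} = {..<N - 1}" by auto
  ultimately show ?thesis by simp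
qed

lemma discard_eta_without_m:
  assumes "\<not> m"
  shows "discard_eta k tie W False \<le> N" "discard_eta k tie W True = 0"
proof -
  have "discard_eta k tie W False \<le> card {i. i < N * L \<and> discard_pstar k tie I i}"
    unfolding discard_eta_def I_def[symmetric] length_W by (rule card_mono) auto
  then show "discard_eta k tie W False \<le> N" using card_discard_pstar_le by simp
  show "discard_eta k tie W True = 0"
    unfolding discard_eta_def using snd_W assms length_W by auto
qed

lemma discard_eta_with_m:
  assumes m
  shows "discard_eta k tie W False = 0" "discard_eta k tie W True \<le> (k - 1) * N + 1"
proof -
  show "discard_eta k tie W False = 0"
    unfolding discard_eta_def I_def[symmetric] using snd_W length_W discard_pstar_in_final_block assms
    by auto
  let ?final = "{i. i < N * L \<and> L - k \<le> i mod L}"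
  let ?discarded = "{i. i < N * L \<and> L - k \<le> i mod L \<and> discard_pstar k tie I i}"
  have "discard_eta k tie W True = card (?final - ?discarded)"
    unfolding discard_eta_def I_def[symmetric] using snd_W length_W assms
    by (intro arg_cong[where f=card]) auto
  also have "\<dots> = card ?final - card ?discarded"
    by (rule card_Diff_subset) auto
  also have "\<dots> \<le> N * k - (N - 1)"
    using card_final_block_positions_le card_discard_pstar_final_block_ge by linarith
  also have "\<dots> \<le> (k - 1) * N + 1"
    using k by (cases N) (auto simp: algebra_simps)
  finally show "discard_eta k tie W True \<le> (k - 1) * N + 1" .
qed

end

section \<open>Phase predictions on the adversarial sequence\<close>

lemma phase_ids_append_within:
  "set rs \<subseteq> T \<Longrightarrow> S \<subseteq> T \<Longrightarrow> finite T \<Longrightarrow> card T \<le> k \<Longrightarrow>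
    phase_ids k S j (rs @ rest) = replicate (length rs) j @ phase_ids k (S \<union> set rs) j rest"
proof (induction rs arbitrary: S)
  case (Cons r rs)
  have "r \<in> S \<or> card S < k"
  proof (cases "r \<in> S")
    case False
    then have "S \<subset> T" using Cons.prems by auto
    then have "card S < card T" by (rule psubset_card_mono[OF Cons.prems(3)])
    then show ?thesis using Cons.prems(4) by simp
  qed simp
  then show ?case using Cons.IH[of "insert r S"] Cons.prems by simp
qed simp

lemma phase_ids_phase_requests:
  assumes k: "1 \<le> k" and xs: "length xs = k" "distinct xs"
    and start: "(hd xs \<notin> S \<and> finite S \<and> card S = k \<and> j' = Suc j) \<or> (S = {} \<and> j' = j)"
  shows "phase_ids k S j (map fst (phase_requests k m xs) @ rest)
    = replicate (phase_length k) j' @ phase_ids k (set xs) j' rest"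
proof -
  let ?rs = "map fst (phase_requests k m xs)"
  have len: "length ?rs = phase_length k"
    using length_phase_requests[OF k xs(1)] by simp
  then have "?rs \<noteq> []" using twice_le_phase_length[of k] k by auto
  moreover have "hd ?rs = hd xs"
    using \<open>?rs \<noteq> []\<close> fst_phase_requests_0[OF k xs(1)] by (simp add: hd_conv_nth)
  ultimately have rs: "?rs = hd xs # tl ?rs" by (metis list.collapse)
  have tl_set: "set (tl ?rs) \<subseteq> set xs" "insert (hd xs) (set (tl ?rs)) = set xs"
    using set_phase_requests[OF k xs(1), of m] rs by (metis list.set_sel(2) subsetI tl_Nil, metis list.simps(15))
  have "phase_ids k S j (?rs @ rest) = j' # phase_ids k {hd xs} j' (tl ?rs @ rest)"
    using start k by (subst rs) auto
  also have "\<dots> = j' # replicate (length (tl ?rs)) j' @ phase_ids k (set xs) j' rest"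
    using phase_ids_append_within[OF tl_set(1), of "{hd xs}" k j' rest] tl_set(2) xs
      distinct_card[OF xs(2)] by auto
  also have "\<dots> = replicate (phase_length k) j' @ phase_ids k (set xs) j' rest"
    using len \<open>?rs \<noteq> []\<close> by (cases "phase_length k") auto
  finally show ?thesis .
qed

lemma phase_ids_phase_chain:
  "1 \<le> k \<Longrightarrow> phase_chain k P S XS \<Longrightarrow> finite S \<Longrightarrow> card S = k \<Longrightarrow>
    phase_ids k S j (concat (map (\<lambda>xs. map fst (phase_requests k m xs)) XS))
    = concat (map (\<lambda>q. replicate (phase_length k) (Suc j + q)) [0..<length XS])"
proof (induction XS arbitrary: S j)
  case (Cons xs XS)
  then have xs: "length xs = k" "distinct xs" "hd xs \<notin> S" "phase_chain k P (set xs) XS"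
    by (auto simp: valid_phase_def)
  have "phase_ids k S j (concat (map (\<lambda>xs. map fst (phase_requests k m xs)) (xs # XS)))
      = replicate (phase_length k) (Suc j)
        @ phase_ids k (set xs) (Suc j) (concat (map (\<lambda>xs. map fst (phase_requests k m xs)) XS))"
    using phase_ids_phase_requests[OF Cons.prems(1) xs(1,2), of S "Suc j" j] xs(3) Cons.prems by simp
  also have "\<dots> = concat (map (\<lambda>q. replicate (phase_length k) (Suc j + q)) [0..<length (xs # XS)])"
    using Cons.IH[OF Cons.prems(1) xs(4)] xs distinct_card[OF xs(2)]
    by (simp del: upt_Suc add: upt_conv_Cons map_Suc_upt[symmetric] o_def)
  finally show ?case .
qed simp

context adversary_run
begin

lemma phase_ids_I: "phase_ids k {} 0 I = concat (map (\<lambda>q. replicate L q) [0..<N])"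
proof (cases XS)
  case Nil
  then show ?thesis unfolding I_def W_def N_def by simp
next
  case (Cons xs XS')
  then have xs: "length xs = k" "distinct xs" "phase_chain k P (set xs) XS'"
    using chain by (auto simp: valid_phase_def)
  have N: "N = Suc (length XS')" unfolding N_def using Cons by simp
  have "I = map fst (phase_requests k m xs) @ concat (map (\<lambda>xs. map fst (phase_requests k m xs)) XS')"
    unfolding I_def W_def using Cons by (simp add: map_concat o_def)
  then have "phase_ids k {} 0 I = replicate L 0
      @ phase_ids k (set xs) 0 (concat (map (\<lambda>xs. map fst (phase_requests k m xs)) XS'))"
    using phase_ids_phase_requests[OF k xs(1,2), of "{}" 0 0] unfolding L_def by simp
  also have "\<dots> = concat (map (\<lambda>q. replicate L q) [0..<N])"
    using phase_ids_phase_chain[OF k xs(3)] xs distinct_card[OF xs(2)] unfolding N L_def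
    by (simp del: upt_Suc add: upt_conv_Cons map_Suc_upt[symmetric] o_def)
  finally show ?thesis .
qed

lemma phase_I: "i < N * L \<Longrightarrow> phase k I i = i div L"
  using nth_concat_same_length[of "map (\<lambda>q. replicate L q) [0..<N]" L "i div L" "i mod L"]
    position_split[of i]
  unfolding phase_def phase_ids_I by simp


lemma counted_in_final_block:
  assumes "counted k I i"
  shows "i < N * L \<and> Suc (i div L) < N \<and> L - k \<le> i mod L"
proof -
  from assms have i: "i < N * L" and "\<exists>i'<N * L. phase k I i < phase k I i'"
    and last: "\<not> (\<exists>i'. i < i' \<and> i' < N * L \<and> phase k I i' = phase k I i \<and> I ! i' = I ! i)"
    unfolding counted_def length_I by auto
  then obtain i' where "i' < N * L" "i div L < i' div L" using phase_I by auto
  then have "Suc (i div L) < N" using position_split[of i'] by linarith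
  moreover have "L - k \<le> i mod L"
  proof (rule ccontr)
    assume early: "\<not> L - k \<le> i mod L"
    define p where "p = i div L"
    have p: "p < N" "i = p * L + i mod L"
      using position_split[OF i] unfolding p_def by auto
    obtain t where t: "t < k" "I ! (p * L + (L - k) + t) = I ! i"
      using final_block_requests_page[OF p(1)] request_in_pages[OF i] unfolding p_def by blast
    let ?pos = "p * L + (L - k) + t"
    have "Suc p * L \<le> N * L" using mult_le_mono1[of "Suc p" N L] p(1) by simp
    then have pos: "?pos < N * L" "?pos div L = p"
      using final_block_position[OF t(1), of p] by (auto intro: div_L_eq)
    moreover have "i < ?pos" using early p(2) by linarith
    ultimately show False
      using last t(2) phase_I[OF pos(1)] phase_I[OF i] unfolding p_def by auto
  qed
  ultimately show ?thesis using i by simp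
qed

lemma counted_last_in_phase:
  assumes "counted k I i" "i < i'" "i' < N * L" "i' div L = i div L"
  shows "I ! i' \<noteq> I ! i"
  using assms phase_I[OF assms(3)] phase_I[of i] counted_in_final_block[OF assms(1)]
  unfolding counted_def length_I by auto

lemma phase_pstar_iff:
  assumes "counted k I i"
  shows "phase_pstar k I i \<longleftrightarrow> I ! i \<notin> pages (Suc (i div L))"
proof -
  have i: "i < N * L" "Suc (i div L) < N" using counted_in_final_block[OF assms] by auto
  have "(\<exists>i'<length I. phase k I i' = Suc (phase k I i) \<and> I ! i' = I ! i)
      \<longleftrightarrow> I ! i \<in> pages (Suc (i div L))"
  proof
    assume "\<exists>i'<length I. phase k I i' = Suc (phase k I i) \<and> I ! i' = I ! i"
    then obtain i' where "i' < N * L" "i' div L = Suc (i div L)" "I ! i' = I ! i"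
      using phase_I i(1) length_I by auto
    then show "I ! i \<in> pages (Suc (i div L))" using request_in_pages by metis
  next
    assume "I ! i \<in> pages (Suc (i div L))"
    then obtain t where t: "t < k" "I ! (Suc (i div L) * L + (L - k) + t) = I ! i"
      using final_block_requests_page[OF i(2)] by blast
    let ?pos = "Suc (i div L) * L + (L - k) + t"
    have "Suc (Suc (i div L)) * L \<le> N * L"
      using mult_le_mono1[of "Suc (Suc (i div L))" N L] i(2) by simp
    then have "?pos < N * L" "?pos div L = Suc (i div L)"
      using final_block_position[OF t(1), of "Suc (i div L)"] by (auto intro: div_L_eq)
    then show "\<exists>i'<length I. phase k I i' = Suc (phase k I i) \<and> I ! i' = I ! i"
      using t(2) phase_I i(1) length_I by (intro exI[of _ ?pos]) auto
  qed
  then show ?thesis unfolding phase_pstar_def by blast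
qed

lemma card_counted_le:
  assumes A: "\<And>i. i \<in> A \<Longrightarrow> counted k I i \<and> I ! i \<in> B (i div L)"
    and B: "\<And>p. Suc p < N \<Longrightarrow> finite (B p) \<and> card (B p) \<le> b"
  shows "card A \<le> N * b"
proof -
  let ?g = "\<lambda>i. (i div L, I ! i)"
  have "inj_on ?g A"
  proof (rule inj_onI)
    fix i j assume ij: "i \<in> A" "j \<in> A" "?g i = ?g j"
    show "i = j"
    proof (rule ccontr)
      assume "i \<noteq> j"
      then consider "i < j" | "j < i" by linarith
      then show False
        using counted_last_in_phase[of i j] counted_last_in_phase[of j i] A[OF ij(1)] A[OF ij(2)] ij(3)
          counted_in_final_block[of i] counted_in_final_block[of j]
        by cases auto
    qed
  qed
  moreover have "?g ` A \<subseteq> Sigma {p. Suc p < N} B"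
    using A counted_in_final_block by auto
  moreover have "finite {p. Suc p < N}" by (rule finite_subset[of _ "{..<N}"]) auto
  moreover have "finite (Sigma {p. Suc p < N} B)"
    using B calculation(3) by (intro finite_SigmaI) auto
  ultimately have "card A \<le> card (Sigma {p. Suc p < N} B)"
    using card_image[of ?g A] card_mono[of "Sigma {p. Suc p < N} B" "?g ` A"] by simp
  also have "\<dots> = (\<Sum>p | Suc p < N. card (B p))"
    using B \<open>finite {p. Suc p < N}\<close> by (intro card_SigmaI) auto
  also have "\<dots> \<le> (\<Sum>p | Suc p < N. b)"
    using B by (intro sum_mono) auto
  also have "\<dots> \<le> N * b"
  proof -
    have "card {p. Suc p < N} \<le> N" by (rule order_trans[OF card_mono[of "{..<N}"]]) auto
    then show ?thesis by (simp add: mult_le_mono1)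
  qed
  finally show ?thesis .
qed

lemma phase_eta_without_m:
  assumes "\<not> m"
  shows "phase_eta k W False \<le> N" "phase_eta k W True = 0"
proof -
  have "phase_eta k W False \<le> N * 1"
    unfolding phase_eta_def I_def[symmetric]
  proof (rule card_counted_le[where B="\<lambda>p. P - pages (Suc p)"])
    fix i assume "i \<in> {i. counted k I i \<and> snd (W ! i) = False \<and> phase_pstar k I i = (\<not> False)}"
    then show "counted k I i \<and> I ! i \<in> P - pages (Suc (i div L))"
      using phase_pstar_iff request_in_P counted_in_final_block by auto
  next
    fix p assume "Suc p < N"
    then show "finite (P - pages (Suc p)) \<and> card (P - pages (Suc p)) \<le> 1"
      using missing_page[of "Suc p"] P by auto
  qed
  then show "phase_eta k W False \<le> N" by simp
  have none: "{i. counted k I i \<and> snd (W ! i) = True \<and> phase_pstar k I i = (\<not> True)} = {}"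
    using counted_in_final_block snd_W assms by auto
  show "phase_eta k W True = 0"
    unfolding phase_eta_def I_def[symmetric] none by simp
qed

lemma phase_eta_with_m:
  assumes m
  shows "phase_eta k W False = 0" "phase_eta k W True \<le> (k - 1) * N"
proof -
  have none: "{i. counted k I i \<and> snd (W ! i) = False \<and> phase_pstar k I i = (\<not> False)} = {}"
    using counted_in_final_block snd_W assms by auto
  show "phase_eta k W False = 0"
    unfolding phase_eta_def I_def[symmetric] none by simp
  have "phase_eta k W True \<le> N * (k - 1)"
    unfolding phase_eta_def I_def[symmetric]
  proof (rule card_counted_le[where B="\<lambda>p. pages (Suc p) - {hd (XS ! Suc p)}"])
    fix i assume "i \<in> {i. counted k I i \<and> snd (W ! i) = True \<and> phase_pstar k I i = (\<not> True)}"
    then have "counted k I i" "I ! i \<in> pages (Suc (i div L))" "I ! i \<in> pages (i div L)"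
      using phase_pstar_iff request_in_pages counted_in_final_block by auto
    then show "counted k I i \<and> I ! i \<in> pages (Suc (i div L)) - {hd (XS ! Suc (i div L))}"
      using P_eq_insert_new_page[of "Suc (i div L)"] counted_in_final_block by auto
  next
    fix p assume "Suc p < N"
    then show "finite (pages (Suc p) - {hd (XS ! Suc p)})
        \<and> card (pages (Suc p) - {hd (XS ! Suc p)}) \<le> k - 1"
      using finite_card_pages[of "Suc p"] hd_in_pages[of "Suc p"] by simp
  qed
  then show "phase_eta k W True \<le> (k - 1) * N" by (simp add: mult.commute)
qed

end

definition adversary_error_bounds :: "nat \<Rightarrow> 'p set \<Rightarrow> 'p set \<Rightarrow> (('p \<times> bool) list \<Rightarrow> bool \<Rightarrow> nat) \<Rightarrow> bool"
  where "adversary_error_bounds k P S eta \<longleftrightarrow> (\<forall>m XS. phase_chain k P S XS \<longrightarrow>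
    opt k (map fst (concat (map (phase_requests k m) XS))) \<le> k + length XS \<and>
    (\<not> m \<longrightarrow> eta (concat (map (phase_requests k m) XS)) False \<le> length XS
            \<and> eta (concat (map (phase_requests k m) XS)) True = 0) \<and>
    (m \<longrightarrow> eta (concat (map (phase_requests k m) XS)) False = 0
          \<and> eta (concat (map (phase_requests k m) XS)) True \<le> (k - 1) * length XS + 1))"

lemma adversary_error_bounds_discard:
  assumes "1 \<le> k" "finite P" "card P = Suc k" "valid_tie tie"
  shows "adversary_error_bounds k P S (discard_eta k tie)"
  unfolding adversary_error_bounds_def
proof (intro allI impI)
  fix m XS assume "phase_chain k P S XS"
  then interpret adversary_run k P S XS tie m using assms by unfold_locales
  show "opt k (map fst (concat (map (phase_requests k m) XS))) \<le> k + length XS \<and>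
    (\<not> m \<longrightarrow> discard_eta k tie (concat (map (phase_requests k m) XS)) False \<le> length XS
            \<and> discard_eta k tie (concat (map (phase_requests k m) XS)) True = 0) \<and>
    (m \<longrightarrow> discard_eta k tie (concat (map (phase_requests k m) XS)) False = 0
          \<and> discard_eta k tie (concat (map (phase_requests k m) XS)) True \<le> (k - 1) * length XS + 1)"
    using opt_le_k_plus_N discard_eta_without_m discard_eta_with_m
    unfolding I_def W_def N_def by blast
qed

lemma adversary_error_bounds_phase:
  fixes P :: "'p set"
  assumes "1 \<le> k" "finite P" "card P = Suc k"
  shows "adversary_error_bounds k P S (phase_eta k)"
  unfolding adversary_error_bounds_def
proof (intro allI impI)
  define tie :: "'p list \<Rightarrow> nat \<Rightarrow> 'p set \<Rightarrow> 'p" where "tie I i F = (SOME q. q \<in> F)" for I i F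
  have "valid_tie tie"
    unfolding valid_tie_def tie_def by (auto intro: someI_ex)
  fix m XS assume "phase_chain k P S XS"
  then interpret adversary_run k P S XS tie m using assms \<open>valid_tie tie\<close> by unfold_locales
  show "opt k (map fst (concat (map (phase_requests k m) XS))) \<le> k + length XS \<and>
    (\<not> m \<longrightarrow> phase_eta k (concat (map (phase_requests k m) XS)) False \<le> length XS
            \<and> phase_eta k (concat (map (phase_requests k m) XS)) True = 0) \<and>
    (m \<longrightarrow> phase_eta k (concat (map (phase_requests k m) XS)) False = 0
          \<and> phase_eta k (concat (map (phase_requests k m) XS)) True \<le> (k - 1) * length XS + 1)"
    using opt_le_k_plus_N phase_eta_without_m phase_eta_with_m
    unfolding I_def W_def N_def by fastforce
qed

lemma weighted_errors_le:
  fixes \<beta> \<gamma> :: real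
  assumes "\<beta> \<ge> 0" "\<gamma> \<ge> 0" "1 \<le> k"
    and "\<not> m \<Longrightarrow> e0 \<le> N \<and> e1 = 0" and "m \<Longrightarrow> e0 = 0 \<and> e1 \<le> (k - 1) * N + 1"
  shows "\<beta> * real e0 + \<gamma> * real e1 \<le> (if m then (real k - 1) * \<gamma> else \<beta>) * real N + \<gamma>"
proof (cases m)
  case True
  have "real e1 \<le> real ((k - 1) * N + 1)"
    using assms(5)[OF True] by (simp only: of_nat_le_iff)
  also have "\<dots> = (real k - 1) * real N + 1"
    using assms(3) by (simp add: of_nat_diff)
  finally have "\<gamma> * real e1 \<le> \<gamma> * ((real k - 1) * real N + 1)"
    using assms(2) by (intro mult_left_mono)
  then show ?thesis using assms(5)[OF True] True by (simp add: algebra_simps)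
next
  case False
  have "\<beta> * real e0 \<le> \<beta> * real N"
    using assms(1) assms(4)[OF False] by (intro mult_left_mono) auto
  then show ?thesis using assms(2) assms(4)[OF False] False by simp
qed

lemma not_competitive_if_adversary_error_bounds:
  assumes R: "valid_alg k R" and k: "1 \<le> k" and P: "finite P" "card P = Suc k"
    and S: "S \<subseteq> P" "card S = k" and eta: "adversary_error_bounds k P S eta"
    and small: "\<alpha> + \<beta> < harm k \<or> \<alpha> + (real k - 1) * \<gamma> < harm k"
  shows "\<not> competitive k eta R \<alpha> \<beta> \<gamma>"
proof
  assume "competitive k eta R \<alpha> \<beta> \<gamma>"
  then obtain b where nonneg: "\<alpha> \<ge> 0" "\<beta> \<ge> 0" "\<gamma> \<ge> 0" and b: "\<And>xs. alg_cost R xs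
      \<le> \<alpha> * real (opt k (map fst xs)) + \<beta> * real (eta xs False) + \<gamma> * real (eta xs True) + b"
    unfolding competitive_def by blast
  \<comment> \<open>The prediction bit m of the final blocks selects which of the two hypotheses is exploited.\<close>
  define m where "m = (\<not> \<alpha> + \<beta> < harm k)"
  define c where "c = \<alpha> + (if m then (real k - 1) * \<gamma> else \<beta>)"
  have "c < harm k" using small unfolding c_def m_def by auto
  then obtain N :: nat where N: "\<alpha> * real k + \<gamma> + b < real N * (harm k - c)"
    using reals_Archimedean2[of "(\<alpha> * real k + \<gamma> + b) / (harm k - c)"]
    by (auto simp: pos_divide_less_eq mult.commute)
  obtain XS where XS: "length XS = N" "phase_chain k P S XS"
    and cost: "real N * harm k \<le> alg_cost R (concat (map (phase_requests k m) XS))"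
    using adversary_cost_lower_bound[OF R P S k] by blast
  define W where "W = concat (map (phase_requests k m) XS)"
  have bounds: "opt k (map fst W) \<le> k + N"
    "\<not> m \<Longrightarrow> eta W False \<le> N \<and> eta W True = 0"
    "m \<Longrightarrow> eta W False = 0 \<and> eta W True \<le> (k - 1) * N + 1"
    using eta XS unfolding adversary_error_bounds_def W_def by blast+
  have "\<alpha> * real (opt k (map fst W)) \<le> \<alpha> * (real k + real N)"
    using bounds(1) nonneg(1) by (intro mult_left_mono) auto
  moreover have "\<beta> * real (eta W False) + \<gamma> * real (eta W True) \<le> (c - \<alpha>) * real N + \<gamma>"
    using weighted_errors_le[OF nonneg(2,3) k bounds(2,3)] unfolding c_def by simp
  moreover have "real N * harm k \<le> alg_cost R W" using cost unfolding W_def .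
  ultimately have "real N * harm k \<le> real N * c + \<alpha> * real k + \<gamma> + b"
    using b[of W] by (simp add: algebra_simps)
  with N show False by (simp add: algebra_simps)
qed

theorem theorem6:
  fixes k :: nat
    and tie :: "'p list \<Rightarrow> nat \<Rightarrow> 'p set \<Rightarrow> 'p"
  assumes "k \<ge> 1"
    and "infinite (UNIV :: 'p set) \<or> k < card (UNIV :: 'p set)"
    and "valid_tie tie"
  shows "(\<forall>(R :: 'p ralg) \<alpha> \<beta> \<gamma>. valid_alg k R \<and> (\<alpha> + \<beta> < harm k \<or> \<alpha> + (real k - 1) * \<gamma> < harm k)
            \<longrightarrow> \<not> competitive k (discard_eta k tie) R \<alpha> \<beta> \<gamma>)
       \<and> (\<forall>(R :: 'p ralg) \<alpha> \<beta> \<gamma>. valid_alg k R \<and> (\<alpha> + \<beta> < harm k \<or> \<alpha> + (real k - 1) * \<gamma> < harm k)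
            \<longrightarrow> \<not> competitive k (phase_eta k) R \<alpha> \<beta> \<gamma>)"
proof -
  obtain P :: "'p set" where P: "finite P" "card P = Suc k"
    using assms(2) infinite_arbitrarily_large[of UNIV "Suc k"]
      obtain_subset_with_card_n[of "Suc k" UNIV] by (metis Suc_leI card.infinite finite_subset)
  obtain S where S: "S \<subseteq> P" "card S = k"
    using obtain_subset_with_card_n[of k P] P by auto
  show ?thesis
    using not_competitive_if_adversary_error_bounds[OF _ assms(1) P S]
      adversary_error_bounds_discard[OF assms(1) P assms(3)]
      adversary_error_bounds_phase[OF assms(1) P] by blast
qed

end
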